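(* Let $\omega\in\{0,\infty\}$ and let $\Gamma_M$ ($M>0$) be a family of nonatomic routing games on a fixed graph with fixed OD pairs $\mathcal I$, path sets and edge costs $(c_e)_{e\in\mathcal E}$, in which OD pair $i$ has demand $m^i=\lambda^iM$ for fixed constants $\lambda^i>0$ with $\sum_i\lambda^i=1$. Suppose that for every edge $e$ there is $q_e\ge 0$ such that $\lim_{x\to\omega}c_e(x)/x^{q_e}$ is finite and nonzero. Then $\mathrm{PoA}(\Gamma_M)\to 1$ as $M\to\omega$.
   Context: A nonatomic routing game consists of: a finite directed multigraph with edge set $\mathcal E$; a finite set $\mathcal I$ of OD pairs, each $i$ with demand $m^i\ge 0$ and a nonempty finite set $\mathcal P^i$ of paths from its origin to its destination, the $\mathcal P^i$ pairwise disjoint, $\mathcal P=\bigcup_i\mathcal P^i$; and continuous nondecreasing edge costs $c_e:[0,\infty)\to[0,\infty)$. Total inflow $M=\sum_i m^i>0$. Feasible flows: $f\in\mathbb R_+^{\mathcal P}$ with $\sum_{p\in\mathcal P^i}f_p=m^i$; loads $x_e=\sum_{p\ni e}f_p$; path costs $c_p(f)=\sum_{e\in p}c_e(x_e)$. A Wardrop equilibrium is a feasible $f^*$ with $c_p(f^* )\le c_{p'}(f^* )$ whenever $p,p'\in\mathcal P^i$, $f^*_p>0$. Social cost $L(x)=\sum_e x_ec_e(x_e)$; $\mathrm{Opt}$ its minimum over feasible loads, $\mathrm{Eq}=L(x^* )$ at an equilibrium load, $\mathrm{PoA}=\mathrm{Eq}/\mathrm{Opt}$ (assumed $\mathrm{Opt}>0$;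 otherwise $\mathrm{PoA}:=1$). *)

theory Defs
  imports "HOL-Analysis.Analysis"
begin

text \<open>A directed multigraph: edge set E (edges of type 'e), with tail/head maps
  src, tgt into vertices 'v.\<close>

definition is_path ::
  "'e set \<Rightarrow> ('e \<Rightarrow> 'v) \<Rightarrow> ('e \<Rightarrow> 'v) \<Rightarrow> 'v \<Rightarrow> 'v \<Rightarrow> 'e list \<Rightarrow> bool" where
  "is_path E src tgt o' d p \<longleftrightarrow>
     distinct p \<and> set p \<subseteq> E \<and>
     (p = [] \<longrightarrow> o' = d) \<and>
     (p \<noteq> [] \<longrightarrow> src (hd p) = o' \<and> tgt (last p) = d \<and>
        (\<forall>k. Suc k < length p \<longrightarrow> tgt (p ! k) = src (p ! Suc k)))"

definition all_paths :: "'i set \<Rightarrow> ('i \<Rightarrow> 'e list set) \<Rightarrow> 'e list set" where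
  "all_paths I Paths = (\<Union>i\<in>I. Paths i)"

definition load :: "'e list set \<Rightarrow> ('e list \<Rightarrow> real) \<Rightarrow> 'e \<Rightarrow> real" where
  "load P f e = (\<Sum>p\<in>P. if e \<in> set p then f p else 0)"

definition path_cost ::
  "'e list set \<Rightarrow> ('e \<Rightarrow> real \<Rightarrow> real) \<Rightarrow> ('e list \<Rightarrow> real) \<Rightarrow> 'e list \<Rightarrow> real" where
  "path_cost P c f p = (\<Sum>e\<in>set p. c e (load P f e))"

definition feasible ::
  "'i set \<Rightarrow> ('i \<Rightarrow> 'e list set) \<Rightarrow> ('i \<Rightarrow> real) \<Rightarrow> ('e list \<Rightarrow> real) \<Rightarrow> bool" where
  "feasible I Paths m f \<longleftrightarrow>
     (\<forall>p\<in>all_paths I Paths. 0 \<le> f p) \<and> (\<forall>i\<in>I. (\<Sum>p\<in>Paths i. f p) = m i)"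

definition wardrop ::
  "'i set \<Rightarrow> ('i \<Rightarrow> 'e list set) \<Rightarrow> ('e \<Rightarrow> real \<Rightarrow> real) \<Rightarrow> ('i \<Rightarrow> real)
     \<Rightarrow> ('e list \<Rightarrow> real) \<Rightarrow> bool" where
  "wardrop I Paths c m f \<longleftrightarrow> feasible I Paths m f \<and>
     (\<forall>i\<in>I. \<forall>p\<in>Paths i. \<forall>p'\<in>Paths i. 0 < f p \<longrightarrow>
        path_cost (all_paths I Paths) c f p \<le> path_cost (all_paths I Paths) c f p')"

definition social_cost ::
  "'e set \<Rightarrow> 'e list set \<Rightarrow> ('e \<Rightarrow> real \<Rightarrow> real) \<Rightarrow> ('e list \<Rightarrow> real) \<Rightarrow> real" where
  "social_cost E P c f = (\<Sum>e\<in>E. load P f e * c e (load P f e))"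

definition Opt ::
  "'e set \<Rightarrow> 'i set \<Rightarrow> ('i \<Rightarrow> 'e list set) \<Rightarrow> ('e \<Rightarrow> real \<Rightarrow> real) \<Rightarrow> ('i \<Rightarrow> real) \<Rightarrow> real" where
  "Opt E I Paths c m = Inf (social_cost E (all_paths I Paths) c ` {f. feasible I Paths m f})"

text \<open>Equilibrium social cost, evaluated at some Wardrop equilibrium
  (the value is the same for all equilibria).\<close>
definition Eq ::
  "'e set \<Rightarrow> 'i set \<Rightarrow> ('i \<Rightarrow> 'e list set) \<Rightarrow> ('e \<Rightarrow> real \<Rightarrow> real) \<Rightarrow> ('i \<Rightarrow> real) \<Rightarrow> real" where
  "Eq E I Paths c m = social_cost E (all_paths I Paths) c (SOME f. wardrop I Paths c m f)"

definition PoA ::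
  "'e set \<Rightarrow> 'i set \<Rightarrow> ('i \<Rightarrow> 'e list set) \<Rightarrow> ('e \<Rightarrow> real \<Rightarrow> real) \<Rightarrow> ('i \<Rightarrow> real) \<Rightarrow> real" where
  "PoA E I Paths c m =
     (if Opt E I Paths c m > 0 then Eq E I Paths c m / Opt E I Paths c m else 1)"

end

theory Submission
  imports Defs
begin

text \<open>Let \<open>f\<close> be an equilibrium for total demand \<open>M\<close>, \<open>D\<close> its largest OD cost and \<open>g\<close> any
  feasible flow. Truncating the edge costs at \<open>D\<close> keeps \<open>f\<close> a solution of the variational
  inequality, so for every \<open>k \<ge> 1\<close> the social costs satisfy \<open>L(g) \<ge> L(f) - \<Sum>\<^sub>e R\<^sub>e\<close> with
  \<open>R\<^sub>e = k \<hat>c\<^sub>e (x\<^sub>e - v\<^sub>e) - x\<^sub>e c\<^sub>e(x\<^sub>e) + v\<^sub>e c\<^sub>e(v\<^sub>e)\<close>; since \<open>L(f) \<ge> min\<^sub>i \<lambda>\<^sup>i M D\<close>, it suffices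
  to show \<open>\<Sum>\<^sub>e R\<^sub>e = o(M D)\<close>.

  Call an edge heavy if it carries more than \<open>\<eta> M D\<close> of the equilibrium cost; some edge is
  heavy when \<open>\<eta>\<close> is small. On a heavy edge both the load and the cost are of the order
  \<open>M\<close> and \<open>D\<close>, and since \<open>c\<^sub>e(t) \<sim> a\<^sub>e t^q\<^sub>e\<close> costs of different degrees drift apart at that
  scale, all heavy edges have one degree \<open>q\<close>. With \<open>k = q + 1\<close>, the term \<open>R\<^sub>e\<close> of a heavy
  edge is the linearisation defect of \<open>a t^(q+1)\<close>, nonpositive by convexity up to
  \<open>o(M c\<^sub>e(\<eta> M))\<close>. On a light edge \<open>R\<^sub>e\<close> is at most \<open>x (k c(v) - c(x))\<close>, which the power
  growth bounds by a multiple of \<open>v c(v) \<le> \<eta> M D\<close> plus terms negligible in the limit.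
  Existence of equilibria follows by minimising Beckmann's potential.\<close>

lemma eventually_at_right_0_less: "0 < (b::real) \<Longrightarrow> eventually (\<lambda>t. 0 < t \<and> t < b) (at_right 0)"
  by (rule eventually_at_rightI[where b=b]) auto

section \<open>Routing games\<close>

locale routing_game =
  fixes E :: "'e set" and I :: "'i set" and Paths :: "'i \<Rightarrow> 'e list set"
    and c :: "'e \<Rightarrow> real \<Rightarrow> real"
  assumes finite_E: "finite E" and finite_I: "finite I" and I_nonempty: "I \<noteq> {}"
    and finite_Paths: "\<And>i. i \<in> I \<Longrightarrow> finite (Paths i)"
    and Paths_nonempty: "\<And>i. i \<in> I \<Longrightarrow> Paths i \<noteq> {}"
    and Paths_subset: "\<And>i p. i \<in> I \<Longrightarrow> p \<in> Paths i \<Longrightarrow> set p \<subseteq> E"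
    and Paths_disjoint: "\<And>i j. i \<in> I \<Longrightarrow> j \<in> I \<Longrightarrow> i \<noteq> j \<Longrightarrow> Paths i \<inter> Paths j = {}"
    and cost_continuous: "\<And>e. e \<in> E \<Longrightarrow> continuous_on {0..} (c e)"
    and cost_mono: "\<And>e. e \<in> E \<Longrightarrow> mono_on {0..} (c e)"
    and cost_nonneg: "\<And>e x. e \<in> E \<Longrightarrow> 0 \<le> x \<Longrightarrow> 0 \<le> c e x"
begin

abbreviation "P \<equiv> all_paths I Paths"

lemma finite_P: "finite P"
  unfolding all_paths_def using finite_I finite_Paths by auto

lemma in_P: "i \<in> I \<Longrightarrow> p \<in> Paths i \<Longrightarrow> p \<in> P"
  unfolding all_paths_def by auto

lemma P_subset: "p \<in> P \<Longrightarrow> set p \<subseteq> E"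
  unfolding all_paths_def using Paths_subset by auto

lemma sum_P: "(\<Sum>p\<in>P. g p) = (\<Sum>i\<in>I. \<Sum>p\<in>Paths i. g p)"
  unfolding all_paths_def
  by (rule sum.UNION_disjoint) (use finite_I finite_Paths Paths_disjoint in auto)

lemma cost_le: "e \<in> E \<Longrightarrow> 0 \<le> y \<Longrightarrow> y \<le> z \<Longrightarrow> c e y \<le> c e z"
  by (rule mono_onD[OF cost_mono]) auto

lemma sum_weighted_load:
  "(\<Sum>e\<in>E. w e * load P f e) = (\<Sum>p\<in>P. f p * (\<Sum>e\<in>set p. w e))"
proof -
  have "(\<Sum>e\<in>E. w e * load P f e) = (\<Sum>p\<in>P. \<Sum>e\<in>E. if e \<in> set p then f p * w e else 0)"
    unfolding load_def
    by (subst sum.swap) (simp add: sum_distrib_left if_distrib mult.commute cong: if_cong)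
  also have "\<dots> = (\<Sum>p\<in>P. f p * (\<Sum>e\<in>set p. w e))"
    using P_subset finite_E
    by (intro sum.cong) (simp_all add: sum.inter_restrict[symmetric] Int_absorb1 sum_distrib_left)
  finally show ?thesis .
qed

lemma load_nonneg: "feasible I Paths m f \<Longrightarrow> 0 \<le> load P f e"
  unfolding load_def feasible_def by (auto intro!: sum_nonneg)

lemma load_le_total_demand: assumes "feasible I Paths m f" shows "load P f e \<le> sum m I"
proof -
  have "load P f e \<le> (\<Sum>p\<in>P. f p)"
    unfolding load_def using assms unfolding feasible_def by (intro sum_mono) auto
  also have "\<dots> = sum m I" using assms unfolding sum_P feasible_def by simp
  finally show ?thesis .
qed

lemma flow_le_load:
  assumes "feasible I Paths m f" "p \<in> P" "e \<in> set p" shows "f p \<le> load P f e"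
proof -
  have "(if e \<in> set p then f p else 0) \<le> load P f e"
    unfolding load_def
    by (rule member_le_sum[of p _ "\<lambda>q. if e \<in> set q then f q else 0"])
       (use assms finite_P in \<open>auto simp: feasible_def\<close>)
  thus ?thesis using assms by simp
qed

lemma continuous_load: "continuous_on UNIV (\<lambda>f. load P f e)"
  unfolding load_def
proof (intro continuous_on_sum)
  fix p show "continuous_on UNIV (\<lambda>f. if e \<in> set p then f p else (0::real))"
    by (cases "e \<in> set p") auto
qed

lemma path_cost_nonneg: "feasible I Paths m f \<Longrightarrow> p \<in> P \<Longrightarrow> 0 \<le> path_cost P c f p"
  unfolding path_cost_def using P_subset by (auto intro!: sum_nonneg cost_nonneg load_nonneg)

lemma social_cost_nonneg: "feasible I Paths m f \<Longrightarrow> 0 \<le> social_cost E P c f"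
  unfolding social_cost_def using load_nonneg cost_nonneg by (auto intro!: sum_nonneg)

subsection \<open>Existence of equilibria\<close>

text \<open>Feasibility says nothing about the values of a flow off \<open>P\<close>; fixing them to \<open>0\<close>
  makes the feasible set compact.\<close>

definition supported_flows :: "('i \<Rightarrow> real) \<Rightarrow> ('e list \<Rightarrow> real) set" where
  "supported_flows m = {f. feasible I Paths m f \<and> (\<forall>p. p \<notin> P \<longrightarrow> f p = 0)}"

lemma compact_supported_flows:
  assumes m: "\<And>i. i \<in> I \<Longrightarrow> 0 \<le> m i"
  shows "compact (supported_flows m)"
proof -
  define S where "S p = {0..(if p \<in> P then sum m I else 0)}" for p
  have "f p \<le> sum m I" if f: "feasible I Paths m f" and p: "p \<in> P" for f p
  proof -
    obtain i where i: "i \<in> I" "p \<in> Paths i" using p unfolding all_paths_def by auto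
    have "f p \<le> (\<Sum>q\<in>Paths i. f q)"
      by (rule member_le_sum) (use f i in_P finite_Paths in \<open>auto simp: feasible_def\<close>)
    also have "\<dots> = m i" using f i unfolding feasible_def by simp
    also have "\<dots> \<le> sum m I" by (rule member_le_sum) (use m i finite_I in auto)
    finally show ?thesis .
  qed
  hence "supported_flows m = PiE UNIV S \<inter> (\<Inter>i\<in>I. {f. (\<Sum>p\<in>Paths i. f p) = m i})"
    unfolding supported_flows_def S_def feasible_def
    by (fastforce simp: PiE_iff split: if_splits)
  moreover have "compactin euclidean (PiE UNIV S)"
    using compactin_PiE[of "\<lambda>_. euclidean" UNIV S] unfolding euclidean_product_topology
    by (auto simp: S_def)
  moreover have "closed (\<Inter>i\<in>I. {f::'e list \<Rightarrow> real. (\<Sum>p\<in>Paths i. f p) = m i})"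
    by (intro closed_INT ballI closed_Collect_eq continuous_on_sum) auto
  ultimately show ?thesis by (simp add: compact_Int_closed)
qed

lemma supported_flows_nonempty:
  assumes m: "\<And>i. i \<in> I \<Longrightarrow> 0 \<le> m i"
  shows "supported_flows m \<noteq> {}"
proof -
  define od where "od p = (THE i. i \<in> I \<and> p \<in> Paths i)" for p
  have od: "i \<in> I \<Longrightarrow> p \<in> Paths i \<Longrightarrow> od p = i" for i p
    unfolding od_def by (rule the_equality) (use Paths_disjoint in auto)
  define pick where "pick i = (SOME p. p \<in> Paths i)" for i
  have pick: "i \<in> I \<Longrightarrow> pick i \<in> Paths i" for i
    unfolding pick_def using Paths_nonempty some_in_eq by metis
  define f where "f p = (if p \<in> P \<and> p = pick (od p) then m (od p) else 0)" for p
  have "(\<Sum>p\<in>Paths i. f p) = m i" if i: "i \<in> I" for i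
  proof -
    have "(\<Sum>p\<in>Paths i. f p) = (\<Sum>p\<in>Paths i. if p = pick i then m i else 0)"
      by (rule sum.cong) (use i od in_P in \<open>auto simp: f_def\<close>)
    also have "\<dots> = m i" using pick[OF i] finite_Paths[OF i] by simp
    finally show ?thesis .
  qed
  moreover have "0 \<le> f p" for p
  proof (cases "p \<in> P")
    case True
    then obtain i where "i \<in> I" "p \<in> Paths i" unfolding all_paths_def by auto
    thus ?thesis using m od unfolding f_def by auto
  qed (simp add: f_def)
  moreover have "p \<notin> P \<Longrightarrow> f p = 0" for p by (simp add: f_def)
  ultimately have "f \<in> supported_flows m"
    unfolding supported_flows_def feasible_def by blast
  thus ?thesis by auto
qed

definition beckmann :: "'e \<Rightarrow> real \<Rightarrow> real" where
  "beckmann e y = integral {0..y} (c e)"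

definition potential :: "('e list \<Rightarrow> real) \<Rightarrow> real" where
  "potential f = (\<Sum>e\<in>E. beckmann e (load P f e))"

lemma cost_integrable: "e \<in> E \<Longrightarrow> 0 \<le> a \<Longrightarrow> c e integrable_on {a..b}"
  by (rule integrable_continuous_real, rule continuous_on_subset[OF cost_continuous]) auto

lemma beckmann_increment_bounds:
  assumes e: "e \<in> E" and ab: "0 \<le> a" "a \<le> b"
  shows "(b - a) * c e a \<le> beckmann e b - beckmann e a"
    and "beckmann e b - beckmann e a \<le> (b - a) * c e b"
proof -
  have "integral {0..a} (c e) + integral {a..b} (c e) = integral {0..b} (c e)"
    by (rule Henstock_Kurzweil_Integration.integral_combine)
       (use ab cost_integrable[OF e, of 0 b] in auto)
  hence diff: "beckmann e b - beckmann e a = integral {a..b} (c e)"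
    unfolding beckmann_def by simp
  have int: "c e integrable_on {a..b}" using cost_integrable[OF e ab(1)] .
  have "integral {a..b} (\<lambda>y. c e a) \<le> integral {a..b} (c e)"
    by (rule integral_le[OF integrable_const_ivl int]) (use e ab cost_le in auto)
  thus "(b - a) * c e a \<le> beckmann e b - beckmann e a" using diff ab by simp
  have "integral {a..b} (c e) \<le> integral {a..b} (\<lambda>y. c e b)"
    by (rule integral_le[OF int integrable_const_ivl]) (use e ab cost_le in auto)
  thus "beckmann e b - beckmann e a \<le> (b - a) * c e b" using diff ab by simp
qed

lemma continuous_on_potential:
  assumes m: "\<And>i. i \<in> I \<Longrightarrow> 0 \<le> m i"
  shows "continuous_on (supported_flows m) potential"
  unfolding potential_def
proof (intro continuous_on_sum)
  fix e assume e: "e \<in> E"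
  have "continuous_on {0..sum m I} (beckmann e)"
    unfolding beckmann_def by (rule indefinite_integral_continuous_1, rule cost_integrable[OF e]) auto
  moreover have "load P f e \<in> {0..sum m I}" if "f \<in> supported_flows m" for f
    using that load_nonneg load_le_total_demand unfolding supported_flows_def by auto
  ultimately show "continuous_on (supported_flows m) (\<lambda>f. beckmann e (load P f e))"
    by (intro continuous_on_compose2[OF _ continuous_on_subset[OF continuous_load]]) auto
qed

definition shift_flow ::
  "('e list \<Rightarrow> real) \<Rightarrow> 'e list \<Rightarrow> 'e list \<Rightarrow> real \<Rightarrow> 'e list \<Rightarrow> real" where
  "shift_flow f p p' t q = f q + (if q = p' then t else 0) - (if q = p then t else 0)"

lemma load_shift_flow:
  assumes "p \<in> P" "p' \<in> P"
  shows "load P (shift_flow f p p' t) e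
           = load P f e + (if e \<in> set p' then t else 0) - (if e \<in> set p then t else 0)"
proof -
  have "load P (shift_flow f p p' t) e = (\<Sum>q\<in>P. (if e \<in> set q then f q else 0)
       + (if q = p' then (if e \<in> set p' then t else 0) else 0)
       - (if q = p then (if e \<in> set p then t else 0) else 0))"
    unfolding load_def shift_flow_def by (rule sum.cong) auto
  also have "\<dots> = load P f e + (if e \<in> set p' then t else 0) - (if e \<in> set p then t else 0)"
    using assms finite_P by (simp add: sum.distrib sum_subtractf load_def)
  finally show ?thesis .
qed

lemma shift_flow_supported:
  assumes f: "f \<in> supported_flows m" and i: "i \<in> I" and p: "p \<in> Paths i" "p' \<in> Paths i"
    and t: "0 \<le> t" "t \<le> f p"
  shows "shift_flow f p p' t \<in> supported_flows m"
proof -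
  have "(\<Sum>q\<in>Paths j. shift_flow f p p' t q) = m j" if j: "j \<in> I" for j
  proof -
    have "(\<Sum>q\<in>Paths j. shift_flow f p p' t q) = (\<Sum>q\<in>Paths j. f q)
            + (if p' \<in> Paths j then t else 0) - (if p \<in> Paths j then t else 0)"
      unfolding shift_flow_def using finite_Paths[OF j] by (simp add: sum.distrib sum_subtractf)
    also have "\<dots> = m j"
      using f j p Paths_disjoint[OF i j] unfolding supported_flows_def feasible_def
      by (cases "j = i") auto
    finally show ?thesis .
  qed
  moreover have "0 \<le> shift_flow f p p' t q" if "q \<in> P" for q
    using f t that unfolding supported_flows_def feasible_def shift_flow_def by auto
  ultimately show ?thesis
    using f p i in_P unfolding supported_flows_def feasible_def shift_flow_def by auto
qed

lemma potential_shift_flow_le: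
  assumes f: "feasible I Paths m f" and p: "p \<in> P" "p' \<in> P" and t: "0 < t" "t \<le> f p"
  shows "potential (shift_flow f p p' t) - potential f
    \<le> t * ((\<Sum>e\<in>set p' - set p. c e (load P f e + t)) - (\<Sum>e\<in>set p - set p'. c e (load P f e - t)))"
proof -
  let ?x = "load P f"
  define A where "A = set p' - set p"
  define B where "B = set p - set p'"
  have AB: "A \<subseteq> E" "B \<subseteq> E" using P_subset p unfolding A_def B_def by auto
  have restrict: "C \<subseteq> E \<Longrightarrow> (\<Sum>e\<in>E. if e \<in> C then g e else 0) = sum g C" for C and g :: "'e \<Rightarrow> real"
    using finite_E by (simp add: sum.If_cases Int_absorb1 inf.absorb2)
  define d where "d e = (if e \<in> A then c e (?x e + t) else 0) - (if e \<in> B then c e (?x e - t) else 0)" for e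
  have "potential (shift_flow f p p' t) - potential f
          = (\<Sum>e\<in>E. beckmann e (load P (shift_flow f p p' t) e) - beckmann e (?x e))"
    unfolding potential_def by (simp add: sum_subtractf)
  also have "\<dots> \<le> (\<Sum>e\<in>E. t * d e)"
  proof (rule sum_mono)
    fix e assume e: "e \<in> E"
    have x0: "0 \<le> ?x e" using load_nonneg[OF f] .
    consider "e \<in> A" | "e \<in> B" | "(e \<in> set p) = (e \<in> set p')" unfolding A_def B_def by blast
    thus "beckmann e (load P (shift_flow f p p' t) e) - beckmann e (?x e) \<le> t * d e"
    proof cases
      case 1
      thus ?thesis using beckmann_increment_bounds(2)[OF e x0, of "?x e + t"] t
        by (auto simp: load_shift_flow[OF p] d_def A_def B_def)
    next
      case 2
      have xt: "0 \<le> ?x e - t" using flow_le_load[OF f p(1), of e] 2 t unfolding B_def by auto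
      show ?thesis using beckmann_increment_bounds(1)[OF e xt, of "?x e"] t 2
        by (auto simp: load_shift_flow[OF p] d_def A_def B_def)
    qed (auto simp: load_shift_flow[OF p] d_def A_def B_def)
  qed
  also have "\<dots> = t * (sum (\<lambda>e. c e (?x e + t)) A - sum (\<lambda>e. c e (?x e - t)) B)"
    unfolding d_def by (simp add: sum_distrib_left[symmetric] sum_subtractf restrict[OF AB(1)] restrict[OF AB(2)])
  finally show ?thesis unfolding A_def B_def .
qed

lemma tendsto_shift_slope:
  assumes f: "feasible I Paths m f" and p: "p \<in> P" "p' \<in> P" and fp: "0 < f p"
  shows "((\<lambda>t. (\<Sum>e\<in>set p' - set p. c e (load P f e + t)) - (\<Sum>e\<in>set p - set p'. c e (load P f e - t)))
           \<longlongrightarrow> path_cost P c f p' - path_cost P c f p) (at_right 0)"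
proof -
  let ?x = "load P f"
  have lim_cost: "((\<lambda>t. c e (?x e + s * t)) \<longlongrightarrow> c e (?x e)) (at_right 0)"
    if e: "e \<in> set p' \<union> set p" and s: "s = 1 \<or> (s = -1 \<and> e \<in> set p)" for e s
  proof (rule continuous_on_tendsto_compose[OF cost_continuous])
    show "e \<in> E" using e P_subset p by auto
    show "((\<lambda>t. ?x e + s * t) \<longlongrightarrow> ?x e) (at_right 0)"
      by (auto intro!: tendsto_eq_intros)
    have "f p \<le> ?x e" if "e \<in> set p" using flow_le_load[OF f p(1) that] .
    thus "eventually (\<lambda>t. ?x e + s * t \<in> {0..}) (at_right 0)"
      using eventually_at_right_0_less[OF fp] s load_nonneg[OF f, of e]
      by (auto elim!: eventually_mono)
  qed (use load_nonneg[OF f] in auto)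
  have "((\<lambda>t. (\<Sum>e\<in>set p' - set p. c e (?x e + 1 * t)) - (\<Sum>e\<in>set p - set p'. c e (?x e + -1 * t)))
           \<longlongrightarrow> (\<Sum>e\<in>set p' - set p. c e (?x e)) - (\<Sum>e\<in>set p - set p'. c e (?x e))) (at_right 0)"
    by (intro tendsto_diff tendsto_sum lim_cost) auto
  moreover have "(\<Sum>e\<in>set p' - set p. c e (?x e)) - (\<Sum>e\<in>set p - set p'. c e (?x e))
                   = path_cost P c f p' - path_cost P c f p"
    unfolding path_cost_def
    using sum.Int_Diff[of "set p'" "\<lambda>e. c e (?x e)" "set p"] sum.Int_Diff[of "set p" "\<lambda>e. c e (?x e)" "set p'"]
    by (simp add: Int_commute)
  ultimately show ?thesis by simp
qed

lemma potential_descent: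
  assumes f: "f \<in> supported_flows m" and i: "i \<in> I" and p: "p \<in> Paths i" "p' \<in> Paths i"
    and fp: "0 < f p" and cheaper: "path_cost P c f p' < path_cost P c f p"
  shows "\<exists>g\<in>supported_flows m. potential g < potential f"
proof -
  have feas: "feasible I Paths m f" using f unfolding supported_flows_def by simp
  have pP: "p \<in> P" "p' \<in> P" using i p in_P by auto
  let ?S = "\<lambda>t. (\<Sum>e\<in>set p' - set p. c e (load P f e + t)) - (\<Sum>e\<in>set p - set p'. c e (load P f e - t))"
  have "eventually (\<lambda>t. ?S t < 0) (at_right 0)"
    by (rule order_tendstoD(2)[OF tendsto_shift_slope[OF feas pP fp]]) (use cheaper in simp)
  moreover note eventually_at_right_0_less[OF fp]
  ultimately obtain t where t: "?S t < 0" "0 < t" "t < f p"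
    using eventually_happens[of _ "at_right (0::real)"] eventually_conj by fastforce
  have "potential (shift_flow f p p' t) - potential f \<le> t * ?S t"
    using potential_shift_flow_le[OF feas pP] t by simp
  also have "\<dots> < 0" using t by (simp add: mult_pos_neg)
  finally show ?thesis using shift_flow_supported[OF f i p, of t] t by force
qed

theorem wardrop_exists:
  assumes m: "\<And>i. i \<in> I \<Longrightarrow> 0 \<le> m i"
  shows "\<exists>f. wardrop I Paths c m f"
proof -
  obtain f where f: "f \<in> supported_flows m" and fmin: "\<And>g. g \<in> supported_flows m \<Longrightarrow> potential f \<le> potential g"
    using continuous_attains_inf[OF compact_supported_flows supported_flows_nonempty
          continuous_on_potential] m by metis
  have "wardrop I Paths c m f"
    unfolding wardrop_def
  proof (intro conjI ballI impI)
    show "feasible I Paths m f" using f unfolding supported_flows_def by simp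
    fix i p p' assume "i \<in> I" "p \<in> Paths i" "p' \<in> Paths i" "0 < f p"
    thus "path_cost P c f p \<le> path_cost P c f p'"
      using potential_descent[OF f] fmin by (meson leD leI)
  qed
  thus ?thesis by blast
qed

definition od_cost :: "('e list \<Rightarrow> real) \<Rightarrow> 'i \<Rightarrow> real" where
  "od_cost f i = Min (path_cost P c f ` Paths i)"

definition max_od_cost :: "('e list \<Rightarrow> real) \<Rightarrow> real" where
  "max_od_cost f = Max (od_cost f ` I)"

lemma od_cost_le: "i \<in> I \<Longrightarrow> p \<in> Paths i \<Longrightarrow> od_cost f i \<le> path_cost P c f p"
  unfolding od_cost_def using finite_Paths by auto

lemma od_cost_attained: "i \<in> I \<Longrightarrow> \<exists>p\<in>Paths i. path_cost P c f p = od_cost f i"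
  unfolding od_cost_def using finite_Paths Paths_nonempty
  by (metis (mono_tags, lifting) Min_in finite_imageI image_iff image_is_empty)

lemma od_cost_nonneg: "feasible I Paths m f \<Longrightarrow> i \<in> I \<Longrightarrow> 0 \<le> od_cost f i"
  using od_cost_attained path_cost_nonneg in_P by metis

lemma od_cost_le_max: "i \<in> I \<Longrightarrow> od_cost f i \<le> max_od_cost f"
  unfolding max_od_cost_def using finite_I by auto

lemma max_od_cost_attained: "\<exists>i\<in>I. od_cost f i = max_od_cost f"
  unfolding max_od_cost_def using finite_I I_nonempty
  by (metis (mono_tags, lifting) Max_in finite_imageI image_iff image_is_empty)

lemma max_od_cost_nonneg: "feasible I Paths m f \<Longrightarrow> 0 \<le> max_od_cost f"
  using max_od_cost_attained od_cost_nonneg by metis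

lemma wardrop_used_path_cost:
  assumes w: "wardrop I Paths c m f" and i: "i \<in> I" "p \<in> Paths i" and fp: "0 < f p"
  shows "path_cost P c f p = od_cost f i"
proof -
  obtain p' where "p' \<in> Paths i" "path_cost P c f p' = od_cost f i"
    using od_cost_attained[OF i(1)] by auto
  thus ?thesis using w i fp od_cost_le[OF i] unfolding wardrop_def by (metis order_antisym)
qed

lemma social_cost_wardrop:
  assumes w: "wardrop I Paths c m f"
  shows "social_cost E P c f = (\<Sum>i\<in>I. m i * od_cost f i)"
proof -
  have feas: "feasible I Paths m f" using w unfolding wardrop_def by simp
  have "social_cost E P c f = (\<Sum>p\<in>P. f p * path_cost P c f p)"
    unfolding social_cost_def path_cost_def sum_weighted_load[symmetric] by (simp add: mult.commute)
  also have "\<dots> = (\<Sum>i\<in>I. \<Sum>p\<in>Paths i. f p * od_cost f i)"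
    unfolding sum_P
    by (intro sum.cong refl, rename_tac i p, case_tac "f p = 0")
       (auto simp: wardrop_used_path_cost[OF w] feas[unfolded feasible_def] in_P less_le)
  also have "\<dots> = (\<Sum>i\<in>I. m i * od_cost f i)"
    using feas unfolding feasible_def by (simp add: sum_distrib_right[symmetric])
  finally show ?thesis .
qed

lemma max_od_cost_le_social_cost:
  assumes w: "wardrop I Paths c m f" and m: "\<And>i. i \<in> I \<Longrightarrow> 0 \<le> m i"
    and \<mu>: "\<And>i. i \<in> I \<Longrightarrow> \<mu> \<le> m i"
  shows "\<mu> * max_od_cost f \<le> social_cost E P c f"
proof -
  have feas: "feasible I Paths m f" using w unfolding wardrop_def by simp
  obtain j where j: "j \<in> I" "od_cost f j = max_od_cost f" using max_od_cost_attained by blast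
  have "\<mu> * max_od_cost f \<le> m j * od_cost f j"
    using j \<mu>[OF j(1)] max_od_cost_nonneg[OF feas] by (simp add: mult_right_mono)
  also have "\<dots> \<le> (\<Sum>i\<in>I. m i * od_cost f i)"
    by (rule member_le_sum[OF j(1)]) (use m od_cost_nonneg[OF feas] finite_I in auto)
  finally show ?thesis using social_cost_wardrop[OF w] by simp
qed

lemma cost_used_edge_le_max_od_cost:
  assumes w: "wardrop I Paths c m f" and e: "e \<in> E" and v: "0 < load P f e"
  shows "c e (load P f e) \<le> max_od_cost f"
proof -
  have feas: "feasible I Paths m f" using w unfolding wardrop_def by auto
  obtain p where p: "p \<in> P" "e \<in> set p" "0 < f p"
  proof (rule ccontr)
    assume "\<not> thesis"
    hence "\<forall>p\<in>P. e \<in> set p \<longrightarrow> f p \<le> 0" using that by force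
    hence "load P f e \<le> 0" unfolding load_def by (intro sum_nonpos) auto
    thus False using v by simp
  qed
  then obtain i where i: "i \<in> I" "p \<in> Paths i" unfolding all_paths_def by auto
  have "c e (load P f e) \<le> path_cost P c f p"
    unfolding path_cost_def
    by (rule member_le_sum[OF p(2)])
       (use P_subset[OF p(1)] load_nonneg[OF feas] in \<open>auto intro!: cost_nonneg\<close>)
  also have "\<dots> = od_cost f i" using wardrop_used_path_cost[OF w i p(3)] .
  also have "\<dots> \<le> max_od_cost f" using od_cost_le_max[OF i(1)] .
  finally show ?thesis .
qed

lemma social_cost_le_max_od_cost:
  assumes w: "wardrop I Paths c m f" and m: "\<And>i. i \<in> I \<Longrightarrow> 0 \<le> m i"
  shows "social_cost E P c f \<le> sum m I * max_od_cost f"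
  unfolding social_cost_wardrop[OF w] sum_distrib_right
  by (intro sum_mono mult_left_mono od_cost_le_max m)

definition truncated_cost :: "('e list \<Rightarrow> real) \<Rightarrow> 'e \<Rightarrow> real" where
  "truncated_cost f e = min (c e (load P f e)) (max_od_cost f)"

lemma truncated_cost_nonneg:
  "feasible I Paths m f \<Longrightarrow> e \<in> E \<Longrightarrow> 0 \<le> truncated_cost f e"
  unfolding truncated_cost_def using max_od_cost_nonneg cost_nonneg load_nonneg by simp

lemma truncated_cost_used_edge:
  assumes w: "wardrop I Paths c m f" and e: "e \<in> E"
  shows "load P f e * truncated_cost f e = load P f e * c e (load P f e)"
proof -
  have "0 \<le> load P f e" using w load_nonneg unfolding wardrop_def by blast
  thus ?thesis
    using cost_used_edge_le_max_od_cost[OF w e] unfolding truncated_cost_def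
    by (cases "load P f e = 0") auto
qed

lemma od_cost_le_truncated_path_cost:
  assumes w: "wardrop I Paths c m f" and i: "i \<in> I" "p \<in> Paths i"
  shows "od_cost f i \<le> (\<Sum>e\<in>set p. truncated_cost f e)"
proof (cases "\<exists>e\<in>set p. max_od_cost f < c e (load P f e)")
  case True
  then obtain e where e: "e \<in> set p" "max_od_cost f < c e (load P f e)" by auto
  have "od_cost f i \<le> truncated_cost f e"
    using e od_cost_le_max[OF i(1)] unfolding truncated_cost_def by simp
  also have "\<dots> \<le> (\<Sum>e\<in>set p. truncated_cost f e)"
    using w Paths_subset[OF i] truncated_cost_nonneg unfolding wardrop_def
    by (intro member_le_sum[OF e(1)]) auto
  finally show ?thesis .
next
  case False
  hence "(\<Sum>e\<in>set p. truncated_cost f e) = path_cost P c f p"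
    unfolding path_cost_def truncated_cost_def by (intro sum.cong) auto
  thus ?thesis using od_cost_le[OF i] by simp
qed

text \<open>Truncating the edge costs at the largest equilibrium cost keeps the equilibrium
  a solution of the variational inequality, but makes its coefficients bounded by it.\<close>

lemma truncated_variational_inequality:
  assumes w: "wardrop I Paths c m f" and g: "feasible I Paths m g"
  shows "0 \<le> (\<Sum>e\<in>E. truncated_cost f e * (load P g e - load P f e))"
proof -
  have "(\<Sum>e\<in>E. truncated_cost f e * load P f e) = social_cost E P c f"
    unfolding social_cost_def mult.commute[of "truncated_cost f _"]
    by (rule sum.cong[OF refl], rule truncated_cost_used_edge[OF w])
  also have "\<dots> = (\<Sum>i\<in>I. \<Sum>p\<in>Paths i. g p * od_cost f i)"
    using social_cost_wardrop[OF w] g unfolding feasible_def by (simp add: sum_distrib_right[symmetric])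
  also have "\<dots> \<le> (\<Sum>i\<in>I. \<Sum>p\<in>Paths i. g p * (\<Sum>e\<in>set p. truncated_cost f e))"
    using g od_cost_le_truncated_path_cost[OF w] in_P unfolding feasible_def
    by (intro sum_mono mult_left_mono) auto
  also have "\<dots> = (\<Sum>e\<in>E. truncated_cost f e * load P g e)"
    unfolding sum_weighted_load sum_P ..
  finally show ?thesis by (simp add: right_diff_distrib sum_subtractf)
qed

text \<open>What the optimum can save on edge \<open>e\<close> relative to the equilibrium \<open>f\<close>, once the
  variational inequality has been added with weight \<open>k\<close>.\<close>

definition defect :: "real \<Rightarrow> ('e list \<Rightarrow> real) \<Rightarrow> ('e list \<Rightarrow> real) \<Rightarrow> 'e \<Rightarrow> real" where
  "defect k f g e = k * truncated_cost f e * (load P g e - load P f e)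
     - load P g e * c e (load P g e) + load P f e * c e (load P f e)"

lemma social_cost_ge_minus_defects:
  assumes w: "wardrop I Paths c m f" and g: "feasible I Paths m g" and k: "0 \<le> k"
  shows "social_cost E P c f - (\<Sum>e\<in>E. defect k f g e) \<le> social_cost E P c g"
proof -
  have "0 \<le> k * (\<Sum>e\<in>E. truncated_cost f e * (load P g e - load P f e))"
    using truncated_variational_inequality[OF w g] k by simp
  thus ?thesis unfolding social_cost_def defect_def
    by (simp add: sum_subtractf sum.distrib sum_distrib_left algebra_simps)
qed

lemma defect_le_excess:
  assumes w: "wardrop I Paths c m f" and g: "feasible I Paths m g" and e: "e \<in> E" and k: "1 \<le> k"
  shows "defect k f g e \<le> load P g e * (k * truncated_cost f e - c e (load P g e))"
proof -
  have v: "0 \<le> load P f e" using w load_nonneg unfolding wardrop_def by blast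
  have "load P f e * c e (load P f e) = 1 * (load P f e * truncated_cost f e)"
    using truncated_cost_used_edge[OF w e] by linarith
  also have "\<dots> \<le> k * (load P f e * truncated_cost f e)"
    using k v w truncated_cost_nonneg[OF _ e] unfolding wardrop_def by (intro mult_right_mono) auto
  finally show ?thesis unfolding defect_def by (simp add: algebra_simps)
qed

definition heavy_edge :: "real \<Rightarrow> real \<Rightarrow> ('e list \<Rightarrow> real) \<Rightarrow> 'e \<Rightarrow> bool" where
  "heavy_edge \<eta> M f e \<longleftrightarrow> \<eta> * M * max_od_cost f < load P f e * c e (load P f e)"

lemma heavy_edge_bounds:
  assumes w: "wardrop I Paths c m f" and M: "sum m I = M" and e: "e \<in> E" and \<eta>: "0 \<le> \<eta>"
    and heavy: "heavy_edge \<eta> M f e"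
  shows "c e (load P f e) \<le> max_od_cost f" "\<eta> * M < load P f e"
    "\<eta> * max_od_cost f < c e (load P f e)"
proof -
  let ?v = "load P f e" and ?D = "max_od_cost f"
  have feas: "feasible I Paths m f" using w unfolding wardrop_def by simp
  have vM: "0 \<le> ?v" "?v \<le> M" using load_nonneg[OF feas] load_le_total_demand[OF feas] M by auto
  have D: "0 \<le> ?D" using max_od_cost_nonneg[OF feas] .
  have "0 \<le> \<eta> * M * ?D" using \<eta> vM D by simp
  hence "0 < ?v * c e ?v" using heavy unfolding heavy_edge_def by linarith
  hence v: "0 < ?v" using vM(1) by (cases "?v = 0") auto
  show cD: "c e ?v \<le> ?D" using cost_used_edge_le_max_od_cost[OF w e v] .
  have "\<eta> * M * ?D < ?v * ?D"
    using heavy mult_left_mono[OF cD vM(1)] unfolding heavy_edge_def by linarith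
  thus "\<eta> * M < ?v" using D by (cases "?D = 0") auto
  have "?v * c e ?v \<le> M * c e ?v" by (rule mult_right_mono[OF vM(2) cost_nonneg[OF e vM(1)]])
  hence "M * (\<eta> * ?D) < M * c e ?v" using heavy unfolding heavy_edge_def by (simp add: algebra_simps)
  thus "\<eta> * ?D < c e ?v" using vM v by (simp add: mult_less_cancel_left)
qed

lemma exists_heavy_edge:
  assumes w: "wardrop I Paths c m f" and m: "\<And>i. i \<in> I \<Longrightarrow> 0 \<le> m i"
    and \<mu>: "\<And>i. i \<in> I \<Longrightarrow> \<mu> \<le> m i" and D: "0 < max_od_cost f"
    and \<eta>: "real (card E) * \<eta> * M < \<mu>"
  shows "\<exists>e\<in>E. heavy_edge \<eta> M f e"
proof (rule ccontr)
  assume "\<not> ?thesis"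
  hence "\<forall>e\<in>E. load P f e * c e (load P f e) \<le> \<eta> * M * max_od_cost f"
    unfolding heavy_edge_def by auto
  hence "social_cost E P c f \<le> real (card E) * (\<eta> * M * max_od_cost f)"
    unfolding social_cost_def by (auto intro!: sum_bounded_above)
  also have "\<dots> < \<mu> * max_od_cost f" using \<eta> D by (simp add: mult.assoc[symmetric])
  also have "\<dots> \<le> social_cost E P c f" using max_od_cost_le_social_cost[OF w m \<mu>] .
  finally show False by simp
qed

lemma heavy_edges_same_degree:
  fixes q :: "'e \<Rightarrow> real"
  assumes w: "wardrop I Paths c m f" and M: "sum m I = M" and \<eta>: "0 < \<eta>" "\<eta> \<le> 1"
    and separated: "\<And>e e' v v'. e \<in> E \<Longrightarrow> e' \<in> E \<Longrightarrow> q e < q e' \<Longrightarrow> \<eta>*M \<le> v \<Longrightarrow> v \<le> M \<Longrightarrow>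
        \<eta>*M \<le> v' \<Longrightarrow> v' \<le> M \<Longrightarrow> \<not> (\<eta> * c e' v' < c e v \<and> \<eta> * c e v < c e' v')"
    and e: "e \<in> E" "heavy_edge \<eta> M f e" and e': "e' \<in> E" "heavy_edge \<eta> M f e'"
  shows "q e = q e'"
proof -
  have feas: "feasible I Paths m f" using w unfolding wardrop_def by simp
  have vM: "load P f d \<le> M" for d using load_le_total_demand[OF feas] M by simp
  note b = heavy_edge_bounds[OF w M e(1) less_imp_le[OF \<eta>(1)] e(2)]
    heavy_edge_bounds[OF w M e'(1) less_imp_le[OF \<eta>(1)] e'(2)]
  have "\<eta> * c e' (load P f e') \<le> \<eta> * max_od_cost f" "\<eta> * c e (load P f e) \<le> \<eta> * max_od_cost f"
    using b(1,4) \<eta> by (simp_all add: mult_left_mono)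
  hence "\<eta> * c e' (load P f e') < c e (load P f e)" "\<eta> * c e (load P f e) < c e' (load P f e')"
    using b(3,6) by linarith+
  thus ?thesis
    using separated[OF e(1) e'(1)] separated[OF e'(1) e(1)] b(2,5) \<eta> vM
    by (metis less_imp_le linorder_neqE_linordered_idom)
qed

end

section \<open>Costs asymptotic to a power\<close>

lemma eventually_pos_at_top_or_at_right_0:
  "F = at_top \<or> F = at_right 0 \<Longrightarrow> eventually (\<lambda>M::real. 0 < M) F"
  using eventually_gt_at_top[of "0::real"] eventually_at_right_less[of "0::real"] by auto

lemma at_top_neq_at_right_0: "(at_top::real filter) \<noteq> at_right 0"
proof
  assume "(at_top::real filter) = at_right 0"
  hence "eventually (\<lambda>x::real. 1 < x) (at_right 0)" using eventually_gt_at_top by metis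
  then obtain b::real where b: "0 < b" "\<And>y. 0 < y \<Longrightarrow> y < b \<Longrightarrow> 1 < y"
    by (auto simp: eventually_at_right_field)
  have "1 < min b 1 / 2" using b by (intro b(2)) (auto simp: min_def)
  thus False by (simp add: min_def split: if_splits)
qed

lemma eventually_const_implies: "(Q \<Longrightarrow> eventually P F) \<Longrightarrow> eventually (\<lambda>x. Q \<longrightarrow> P x) F"
  by (cases Q) auto

lemma eventually_all_between:
  assumes F: "F = at_top \<or> F = at_right 0" and \<delta>: "0 < (\<delta>::real)" and P: "eventually P F"
  shows "eventually (\<lambda>M. \<forall>t. \<delta> * M \<le> t \<and> t \<le> M \<longrightarrow> P t) F"
  using F
proof
  assume F: "F = at_top"
  then obtain N where N: "\<And>n. N \<le> n \<Longrightarrow> P n" using P by (auto simp: eventually_at_top_linorder)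
  have "eventually (\<lambda>M. N / \<delta> \<le> M) at_top" by (rule eventually_ge_at_top)
  thus ?thesis
    unfolding F by eventually_elim (use N \<delta> in \<open>auto simp: field_simps\<close>)
next
  assume F: "F = at_right 0"
  then obtain b where b: "0 < b" "\<And>y. 0 < y \<Longrightarrow> y < b \<Longrightarrow> P y"
    using P by (auto simp: eventually_at_right_field)
  show ?thesis
    unfolding F using eventually_at_right_0_less[OF b(1)]
  proof eventually_elim
    case (elim M)
    have "0 < \<delta> * M" using \<delta> elim by simp
    thus ?case using b(2) elim by force
  qed
qed

lemma eventually_le_powr_at_top: "0 < r \<Longrightarrow> eventually (\<lambda>M::real. K \<le> M powr r) at_top"
proof (cases "K \<le> 0")
  case True thus ?thesis by (intro always_eventually) (auto intro: order_trans[OF _ powr_ge_zero])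
next
  case False
  assume r: "0 < r"
  have "eventually (\<lambda>M. K powr (1/r) \<le> M) at_top" by (rule eventually_ge_at_top)
  thus ?thesis
  proof eventually_elim
    case (elim M)
    have "K = (K powr (1/r)) powr r" using False r by (simp add: powr_powr)
    also have "\<dots> \<le> M powr r" by (rule powr_mono2) (use r elim in auto)
    finally show ?case .
  qed
qed

lemma eventually_powr_le_at_right_0:
  assumes "0 < r" "0 < K" shows "eventually (\<lambda>M::real. M powr r \<le> K) (at_right 0)"
proof -
  have "0 < K powr (1/r)" using assms by simp
  from eventually_at_right_0_less[OF this] show ?thesis
  proof eventually_elim
    case (elim M)
    have "M powr r \<le> (K powr (1/r)) powr r" by (rule powr_mono2) (use assms elim in auto)
    also have "\<dots> = K" using assms by (simp add: powr_powr)
    finally show ?case .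
  qed
qed

lemma powr_add_one: "0 \<le> (t::real) \<Longrightarrow> t powr (q + 1) = t * t powr q"
  by (cases "t = 0") (auto simp: powr_add mult.commute)

lemma powr_tangent_le:
  fixes q v x :: real
  assumes q: "0 \<le> q" and v: "0 < v" and x: "0 \<le> x"
  shows "v * v powr q + (q + 1) * v powr q * (x - v) \<le> x * x powr q"
proof (cases "x = 0")
  case True
  have "v * v powr q + (q + 1) * v powr q * (0 - v) = - q * (v * v powr q)" by (simp add: algebra_simps)
  also have "\<dots> \<le> 0" using q v by simp
  finally show ?thesis using True by simp
next
  case False
  have convex: "convex_on {0<..} (\<lambda>t. t powr (q + 1))" by (rule powr_convex) (use q in simp)
  have deriv: "((\<lambda>t. t powr (q + 1)) has_field_derivative (q + 1) * v powr q) (at v within {0<..})"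
    using has_real_derivative_powr[OF v, of "q + 1"] by (auto intro: has_field_derivative_at_within)
  have "x powr (q + 1) - v powr (q + 1) \<ge> (q + 1) * v powr q * (x - v)"
    by (rule convex_on_imp_above_tangent[OF convex _ _ _ deriv])
       (use v x False in \<open>auto simp: interior_open\<close>)
  thus ?thesis using powr_add_one[OF x, of q] powr_add_one[of v q] v by (simp add: algebra_simps)
qed

text \<open>For an exact power cost \<open>a t^q\<close> the left-hand side is nonpositive by convexity of
  \<open>t^(q+1)\<close>; the \<open>\<epsilon>\<close>-terms account for the deviation of the cost from the power.\<close>

lemma linearization_defect_le:
  fixes q a \<epsilon> M v x cv cx :: real
  assumes q: "0 \<le> q" and a: "0 < a" and \<epsilon>: "0 \<le> \<epsilon>"
    and v: "0 < v" "v \<le> M" and x: "0 \<le> x" "x \<le> M"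
    and cv: "(a - \<epsilon>) * v powr q \<le> cv" "cv \<le> (a + \<epsilon>) * v powr q"
    and cx: "a * (x * x powr q) - \<epsilon> * (M * M powr q) \<le> x * cx"
  shows "(q + 1) * cv * (x - v) - x * cx + v * cv \<le> \<epsilon> * (2 * q + 2) * (M * M powr q)"
proof -
  have vq: "v powr q \<le> M powr q" and xq: "x powr q \<le> M powr q"
    using q v x by (auto intro: powr_mono2)
  have "(q + 1) * cv * (x - v) - x * cx + v * cv = (q + 1) * x * cv - q * v * cv - x * cx"
    by (simp add: algebra_simps)
  also have "\<dots> \<le> (q + 1) * x * ((a + \<epsilon>) * v powr q) - q * v * ((a - \<epsilon>) * v powr q)
                  - (a * (x * x powr q) - \<epsilon> * (M * M powr q))"
    using cv cx q v x by (intro diff_mono mult_left_mono) auto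
  also have "\<dots> = a * ((q + 1) * (x * v powr q) - q * (v * v powr q) - x * x powr q)
                  + \<epsilon> * ((q + 1) * (x * v powr q) + q * (v * v powr q) + M * M powr q)"
    by (simp add: algebra_simps)
  also have "\<dots> \<le> a * 0 + \<epsilon> * ((q + 1) * (M * M powr q) + q * (M * M powr q) + M * M powr q)"
  proof (rule add_mono)
    have "(q + 1) * (x * v powr q) - q * (v * v powr q) - x * x powr q \<le> 0"
      using powr_tangent_le[OF q v(1) x(1)] by (simp add: algebra_simps)
    thus "a * ((q + 1) * (x * v powr q) - q * (v * v powr q) - x * x powr q) \<le> a * 0"
      using a by (intro mult_left_mono) auto
    have "(q + 1) * (x * v powr q) + q * (v * v powr q) + M * M powr q
            \<le> (q + 1) * (M * M powr q) + q * (M * M powr q) + M * M powr q"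
      using q v x vq by (intro add_mono mult_left_mono mult_mono) auto
    thus "\<epsilon> * ((q + 1) * (x * v powr q) + q * (v * v powr q) + M * M powr q)
            \<le> \<epsilon> * ((q + 1) * (M * M powr q) + q * (M * M powr q) + M * M powr q)"
      using \<epsilon> by (rule mult_left_mono)
  qed
  also have "\<dots> = \<epsilon> * (2 * q + 2) * (M * M powr q)" by (simp add: algebra_simps)
  finally show ?thesis .
qed

locale power_cost =
  fixes c :: "real \<Rightarrow> real" and q a :: real and F :: "real filter"
  assumes F_cases: "F = at_top \<or> F = at_right 0"
    and cost_continuous: "continuous_on {0..} c" and cost_mono: "mono_on {0..} c"
    and cost_nonneg: "\<And>x. 0 \<le> x \<Longrightarrow> 0 \<le> c x"
    and q_nonneg: "0 \<le> q" and a_pos: "0 < a"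
    and tendsto_power: "((\<lambda>x. c x / x powr q) \<longlongrightarrow> a) F"
begin

lemma cost_le: "0 \<le> x \<Longrightarrow> x \<le> y \<Longrightarrow> c x \<le> c y"
  by (rule mono_onD[OF cost_mono]) auto

lemma F_nontrivial: "F \<noteq> bot"
  using F_cases trivial_limit_at_right_real trivial_limit_at_top_linorder by metis

lemma eventually_pos: "eventually (\<lambda>M. 0 < M) F"
  using eventually_pos_at_top_or_at_right_0[OF F_cases] .

lemma eventually_near_power:
  assumes \<epsilon>: "0 < \<epsilon>"
  shows "eventually (\<lambda>x. 0 < x \<and> \<bar>c x - a * x powr q\<bar> \<le> \<epsilon> * x powr q) F"
  using tendstoD[OF tendsto_power \<epsilon>] eventually_pos
proof eventually_elim
  case (elim x)
  hence "\<bar>c x / x powr q - a\<bar> * x powr q \<le> \<epsilon> * x powr q"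
    by (intro mult_right_mono) (auto simp: dist_real_def)
  thus ?case using elim by (simp add: abs_mult field_simps)
qed

lemma eventually_near_power_between:
  "0 < \<delta> \<Longrightarrow> 0 < \<epsilon> \<Longrightarrow>
    eventually (\<lambda>M. \<forall>t. \<delta> * M \<le> t \<and> t \<le> M \<longrightarrow> 0 < t \<and> \<bar>c t - a * t powr q\<bar> \<le> \<epsilon> * t powr q) F"
  by (rule eventually_all_between[OF F_cases _ eventually_near_power])

lemma eventually_power_bounds:
  "eventually (\<lambda>t. 0 < t \<and> a/2 * t powr q \<le> c t \<and> c t \<le> 2*a * t powr q) F"
proof -
  have "0 < a/2" using a_pos by simp
  from eventually_near_power[OF this] show ?thesis
  proof eventually_elim
    case (elim t)
    have "0 \<le> a * t powr q" using a_pos by simp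
    thus ?case using elim unfolding abs_le_iff by linarith
  qed
qed

lemma eventually_power_bounds_scaled:
  assumes \<eta>: "0 < \<eta>" "\<eta> \<le> 1"
  shows "eventually (\<lambda>M. 0 < M \<and> a/2 * (\<eta>*M) powr q \<le> c (\<eta>*M) \<and> c M \<le> 2*a * M powr q) F"
  using eventually_all_between[OF F_cases \<eta>(1) eventually_power_bounds] eventually_pos
proof eventually_elim
  case (elim M)
  have "\<eta> * M \<le> M" using \<eta> elim by (simp add: mult_le_cancel_right1)
  thus ?case using elim by auto
qed

lemma tendsto_cost_degree_0: assumes "q = 0" shows "(c \<longlongrightarrow> a) F"
proof -
  have "eventually (\<lambda>x. c x / x powr q = c x) F"
    using eventually_pos by eventually_elim (simp add: assms)
  from tendsto_cong[OF this] show ?thesis using tendsto_power by simp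
qed

lemma cost_le_limit_at_top: assumes "F = at_top" "q = 0" "0 \<le> x" shows "c x \<le> a"
proof -
  have "eventually (\<lambda>t. c x \<le> c t) F"
    unfolding assms(1) using eventually_ge_at_top[of x] by eventually_elim (use assms cost_le in auto)
  thus ?thesis using tendsto_lowerbound[OF tendsto_cost_degree_0[OF assms(2)] _ F_nontrivial] by simp
qed

lemma tendsto_cost_at_right_0: assumes "F = at_right 0" shows "(c \<longlongrightarrow> c 0) F"
  unfolding assms
  by (rule continuous_on_tendsto_compose[OF cost_continuous tendsto_ident_at])
     (auto intro: eventually_mono[OF eventually_at_right_less])

lemma limit_le_cost_at_right_0: assumes "F = at_right 0" "q = 0" "0 \<le> x" shows "a \<le> c x"
  using tendsto_unique[OF F_nontrivial tendsto_cost_at_right_0[OF assms(1)] tendsto_cost_degree_0[OF assms(2)]]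
    cost_le[OF _ assms(3)] by simp

lemma cost_0_at_right_0: assumes "F = at_right 0" "0 < q" shows "c 0 = 0"
proof -
  have "((\<lambda>x. c x / x powr q * x powr q) \<longlongrightarrow> a * 0 powr q) F"
    using eventually_mono[OF eventually_pos] by (intro tendsto_intros tendsto_power) (use assms in auto)
  moreover have "eventually (\<lambda>x. c x / x powr q * x powr q = c x) F"
    using eventually_pos by eventually_elim simp
  ultimately have "(c \<longlongrightarrow> 0) F"
    using assms tendsto_cong[of "\<lambda>x. c x / x powr q * x powr q" c] by simp
  thus ?thesis using tendsto_unique[OF F_nontrivial tendsto_cost_at_right_0[OF assms(1)]] by simp
qed

lemma eventually_ge_cost_at_top:
  assumes F: "F = at_top" and q: "0 < q" and \<eta>: "0 < \<eta>" "\<eta> \<le> 1"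
  shows "eventually (\<lambda>M. K \<le> c (\<eta>*M)) F"
  using eventually_power_bounds_scaled[OF \<eta>] eventually_le_powr_at_top[OF q, of "2 * K / (a * \<eta> powr q)"]
  unfolding F
proof eventually_elim
  case (elim M)
  have "K \<le> a/2 * (\<eta> powr q * M powr q)" using elim \<eta> a_pos by (simp add: field_simps)
  also have "\<dots> = a/2 * (\<eta>*M) powr q" by (simp add: powr_mult)
  also have "\<dots> \<le> c (\<eta>*M)" using elim by simp
  finally show ?case .
qed

lemma eventually_cost_le_at_right_0:
  assumes F: "F = at_right 0" and q: "0 < q" and K: "0 < K"
  shows "eventually (\<lambda>M. c M \<le> K) F"
proof -
  have "0 < K / (2*a)" using K a_pos by simp
  from eventually_power_bounds eventually_powr_le_at_right_0[OF q this] show ?thesis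
    unfolding F
  proof eventually_elim
  case (elim M)
  have "c M \<le> 2*a * M powr q" using elim by simp
  also have "\<dots> \<le> 2*a * (K / (2*a))" using elim a_pos by (intro mult_left_mono) auto
  finally show ?case using a_pos by simp
  qed
qed

text \<open>Additive constants are negligible against \<open>M c(\<eta> M)\<close> in heavy traffic; in light
  traffic only the constant \<open>0\<close> is.\<close>

lemma eventually_le_scaled_cost:
  assumes B: "0 \<le> B" "F = at_right 0 \<longrightarrow> B = 0" and \<eta>: "0 < \<eta>" "\<eta> \<le> 1" and \<epsilon>: "0 < \<epsilon>"
  shows "eventually (\<lambda>M. B \<le> \<epsilon> * M * c (\<eta>*M)) F"
  using F_cases
proof
  assume F: "F = at_right 0"
  show ?thesis using eventually_pos
  proof eventually_elim
    case (elim M)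
    thus ?case using B F \<eta> \<epsilon> cost_nonneg[of "\<eta>*M"] by simp
  qed
next
  assume F: "F = at_top"
  have "eventually (\<lambda>M. max (1/\<eta>) (2*B/(\<epsilon>*a)) \<le> M) F" unfolding F by (rule eventually_ge_at_top)
  thus ?thesis using eventually_power_bounds_scaled[OF \<eta>]
  proof eventually_elim
    case (elim M)
    have "1 \<le> \<eta> * M" using elim \<eta> by (simp add: field_simps)
    hence "1 \<le> (\<eta>*M) powr q" using q_nonneg by (rule ge_one_powr_ge_zero)
    hence "a/2 * 1 \<le> a/2 * (\<eta>*M) powr q" using a_pos by (intro mult_left_mono) auto
    hence ca: "a/2 \<le> c (\<eta>*M)" using elim by linarith
    have "B = \<epsilon> * (2*B/(\<epsilon>*a)) * (a/2)" using \<epsilon> a_pos by (simp add: field_simps)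
    also have "\<dots> \<le> \<epsilon> * M * c (\<eta>*M)"
      using elim ca B \<epsilon> a_pos by (intro mult_mono mult_left_mono) auto
    finally show ?case .
  qed
qed

text \<open>Below \<open>\<delta> M\<close> nothing is known about \<open>c\<close>, but there the power term itself is small.\<close>

lemma cost_mass_ge_power:
  assumes near: "\<And>t. \<delta>*M \<le> t \<Longrightarrow> t \<le> M \<Longrightarrow> \<bar>c t - a * t powr q\<bar> \<le> \<epsilon> * t powr q"
    and \<delta>: "0 \<le> \<delta>" "a * \<delta> \<le> \<epsilon>" and x: "0 \<le> x" "x \<le> M"
  shows "a * (x * x powr q) - \<epsilon> * (M * M powr q) \<le> x * c x"
proof (cases "\<delta>*M \<le> x")
  case True
  have \<epsilon>: "0 \<le> \<epsilon>" using \<delta> a_pos by (metis less_imp_le mult_nonneg_nonneg order_trans)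
  have "(a - \<epsilon>) * x powr q \<le> c x"
    using near[OF True x(2)] unfolding abs_le_iff by (auto simp: algebra_simps)
  hence "x * ((a - \<epsilon>) * x powr q) \<le> x * c x" using x by (intro mult_left_mono) auto
  moreover have "\<epsilon> * (x * x powr q) \<le> \<epsilon> * (M * M powr q)"
    using x q_nonneg \<epsilon> by (intro mult_left_mono mult_mono powr_mono2) auto
  ultimately show ?thesis by (simp add: algebra_simps)
next
  case False
  have M: "0 \<le> M" using x by simp
  have "a * (x * x powr q) \<le> a * ((\<delta>*M) * M powr q)"
    using False x q_nonneg a_pos by (intro mult_left_mono mult_mono powr_mono2) auto
  also have "\<dots> = (a * \<delta>) * (M * M powr q)" by (simp add: algebra_simps)
  also have "\<dots> \<le> \<epsilon> * (M * M powr q)" using \<delta> M by (intro mult_right_mono) auto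
  finally have "a * (x * x powr q) \<le> \<epsilon> * (M * M powr q)" .
  moreover have "0 \<le> x * c x" using cost_nonneg[of x] x by simp
  ultimately show ?thesis by linarith
qed

lemma eventually_linearization_defect_le:
  assumes \<eta>: "0 < \<eta>" "\<eta> \<le> 1" and \<epsilon>: "0 < \<epsilon>"
  shows "eventually (\<lambda>M. \<forall>v x. \<eta>*M \<le> v \<and> v \<le> M \<and> 0 \<le> x \<and> x \<le> M \<longrightarrow>
           (q+1) * c v * (x - v) - x * c x + v * c v \<le> \<epsilon> * M * c (\<eta>*M)) F"
proof -
  define \<epsilon>' where "\<epsilon>' = min (a/2) (\<epsilon> * a * \<eta> powr q / (4*q+4))"
  have \<eta>q: "0 < \<eta> powr q" using \<eta> by simp
  have q4: "0 < 4*q+4" using q_nonneg by simp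
  have \<epsilon>'_pos: "0 < \<epsilon>'" unfolding \<epsilon>'_def using a_pos \<eta>q \<epsilon> q4 by simp
  have \<epsilon>'_le: "\<epsilon>' \<le> a/2" unfolding \<epsilon>'_def by (rule min.cobounded1)
  have "\<epsilon>' * (4*q+4) \<le> \<epsilon> * a * \<eta> powr q"
    using q4 unfolding \<epsilon>'_def by (simp add: pos_le_divide_eq min_def)
  hence \<epsilon>'_q: "\<epsilon>' * (2*q+2) \<le> \<epsilon> * (a/2) * \<eta> powr q" by (simp add: algebra_simps)
  define \<delta> where "\<delta> = min \<eta> (\<epsilon>'/a)"
  have \<delta>: "0 < \<delta>" "\<delta> \<le> \<eta>" "a * \<delta> \<le> \<epsilon>'"
    unfolding \<delta>_def using \<eta> \<epsilon>'_pos a_pos by (auto simp: field_simps min_def)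
  show ?thesis using eventually_near_power_between[OF \<delta>(1) \<epsilon>'_pos] eventually_pos
  proof eventually_elim
    case (elim M)
    hence M: "0 < M" and near: "\<And>t. \<delta>*M \<le> t \<Longrightarrow> t \<le> M \<Longrightarrow> 0 < t \<and> \<bar>c t - a * t powr q\<bar> \<le> \<epsilon>' * t powr q"
      by auto
    have \<delta>\<eta>: "\<delta>*M \<le> \<eta>*M" "\<eta>*M \<le> M" using \<delta> \<eta> M by (auto simp: mult_le_cancel_right1)
    show ?case
    proof (intro allI impI)
      fix v x assume vx: "\<eta>*M \<le> v \<and> v \<le> M \<and> 0 \<le> x \<and> x \<le> M"
      have v2: "\<delta>*M \<le> v" using vx \<delta>\<eta>(1) by linarith
      have v: "0 < v" "\<delta>*M \<le> v" using near[OF v2] vx v2 by auto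
      have cv: "(a - \<epsilon>') * v powr q \<le> c v" "c v \<le> (a + \<epsilon>') * v powr q"
        using near[OF v(2)] vx unfolding abs_le_iff by (auto simp: algebra_simps)
      have cx: "a * (x * x powr q) - \<epsilon>' * (M * M powr q) \<le> x * c x"
        by (rule cost_mass_ge_power) (use near \<delta> vx in \<open>force+\<close>)
      have "(q+1) * c v * (x - v) - x * c x + v * c v \<le> \<epsilon>' * (2 * q + 2) * (M * M powr q)"
        by (rule linearization_defect_le[OF q_nonneg a_pos _ v(1) _ _ _ cv cx])
           (use \<epsilon>'_pos vx in auto)
      also have "\<dots> \<le> (\<epsilon> * (a/2) * \<eta> powr q) * (M * M powr q)"
        using \<epsilon>'_q M by (intro mult_right_mono) auto
      also have "\<dots> = \<epsilon> * M * (a/2 * (\<eta>*M) powr q)" by (simp add: powr_mult algebra_simps)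
      also have "\<dots> \<le> \<epsilon> * M * c (\<eta>*M)"
      proof -
        have "(a - \<epsilon>') * (\<eta>*M) powr q \<le> c (\<eta>*M)"
          using near[OF \<delta>\<eta>] unfolding abs_le_iff by (auto simp: algebra_simps)
        moreover have "a/2 * (\<eta>*M) powr q \<le> (a - \<epsilon>') * (\<eta>*M) powr q"
          using \<epsilon>'_le by (intro mult_right_mono) auto
        ultimately show ?thesis using \<epsilon> M by (intro mult_left_mono) auto
      qed
      finally show "(q+1) * c v * (x - v) - x * c x + v * c v \<le> \<epsilon> * M * c (\<eta>*M)" .
    qed
  qed
qed

text \<open>The excess \<open>x (k c(v) - c(x))\<close> measures how much a load \<open>x\<close> can gain on an edge
  against the equilibrium load \<open>v\<close>; for positive degree it is controlled by \<open>v c(v)\<close>.\<close>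

lemma excess_le_of_power_bounds:
  assumes q: "0 < q" and k: "1 \<le> k" and x: "0 < x" and v: "0 < v"
    and cx: "a/2 * x powr q \<le> c x" and cv: "c v \<le> 2*a * v powr q" and lt: "c x < k * c v"
  shows "x * (k * c v - c x) \<le> (k * (4*k) powr (1/q)) * (v * c v)"
proof -
  have "a/2 * x powr q < k * (2*a * v powr q)"
    using cx lt mult_left_mono[OF cv, of k] k by linarith
  hence "(x/v) powr q < 4*k" using a_pos v by (simp add: powr_divide field_simps)
  hence "((x/v) powr q) powr (1/q) < (4*k) powr (1/q)"
    by (intro powr_less_mono2) (use q in auto)
  hence "x \<le> (4*k) powr (1/q) * v" using q x v by (simp add: powr_powr field_simps)
  hence "x * (k * c v) \<le> ((4*k) powr (1/q) * v) * (k * c v)"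
    using cost_nonneg[of v] v k by (intro mult_right_mono) auto
  moreover have "x * (k * c v - c x) \<le> x * (k * c v)"
    using cost_nonneg[of x] x by (intro mult_left_mono) auto
  ultimately show ?thesis by (simp add: algebra_simps)
qed

lemma thresholds_at_top:
  assumes F: "F = at_top" and q: "0 < q"
  obtains X Y where "0 < X" "X \<le> Y"
    "\<And>t. X \<le> t \<Longrightarrow> a/2 * t powr q \<le> c t \<and> c t \<le> 2*a * t powr q"
    "\<And>t. Y \<le> t \<Longrightarrow> k * c X < c t"
proof -
  obtain N where N: "\<And>t. N \<le> t \<Longrightarrow> a/2 * t powr q \<le> c t \<and> c t \<le> 2*a * t powr q"
    using eventually_power_bounds unfolding F eventually_at_top_linorder by auto
  define X where "X = max N 1"
  have X: "0 < X" and bounds: "\<And>t. X \<le> t \<Longrightarrow> a/2 * t powr q \<le> c t \<and> c t \<le> 2*a * t powr q"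
    using N unfolding X_def by auto
  have "eventually (\<lambda>t. k * c X < a/2 * t powr q) at_top"
    using eventually_le_powr_at_top[OF q, of "2 * (k * c X) / a + 1"]
    by eventually_elim (use a_pos in \<open>simp add: field_simps\<close>)
  then obtain Y' where Y': "\<And>t. Y' \<le> t \<Longrightarrow> k * c X < a/2 * t powr q"
    by (auto simp: eventually_at_top_linorder)
  have "\<And>t. max Y' X \<le> t \<Longrightarrow> k * c X < c t"
    using Y' bounds by (meson max.boundedE order_less_le_trans)
  thus ?thesis using that[OF X, of "max Y' X"] bounds by simp
qed

lemma excess_bound_at_top:
  assumes F: "F = at_top" and q: "0 < q" and k: "1 \<le> k"
  shows "\<exists>A B. 0 \<le> A \<and> 0 \<le> B \<and>
    (\<forall>v x. 0 \<le> v \<longrightarrow> 0 \<le> x \<longrightarrow> x * (k * c v - c x) \<le> A * (v * c v) + B)"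
proof -
  obtain X Y where X: "0 < X" and XY: "X \<le> Y"
    and bounds: "\<And>t. X \<le> t \<Longrightarrow> a/2 * t powr q \<le> c t \<and> c t \<le> 2*a * t powr q"
    and Y: "\<And>t. Y \<le> t \<Longrightarrow> k * c X < c t"
    using thresholds_at_top[OF F q] by blast
  define A where "A = max (Y * k / X) (k * (4*k) powr (1/q))"
  define B where "B = Y * k * c X"
  have cX: "0 \<le> c X" using cost_nonneg X by simp
  have A: "0 \<le> A" unfolding A_def using k by (simp add: max.coboundedI2)
  have B: "0 \<le> B" unfolding B_def using X XY k cX by simp
  have "x * (k * c v - c x) \<le> A * (v * c v) + B" if v: "0 \<le> v" and x: "0 \<le> x" for v x
  proof -
    have vcv: "0 \<le> A * (v * c v)" using A cost_nonneg v by simp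
    have cv: "0 \<le> c v" using cost_nonneg v by simp
    have base: "x * (k * c v - c x) \<le> x * (k * c v)"
      using cost_nonneg[OF x] x by (intro mult_left_mono) auto
    consider "k * c v \<le> c x" | "c x < k * c v" "v \<le> X" | "c x < k * c v" "X < v" "x \<le> Y"
      | "c x < k * c v" "X < v" "Y < x" by (meson linorder_not_le)
    thus ?thesis
    proof cases
      case 1
      hence "x * (k * c v - c x) \<le> 0" using x by (simp add: mult_nonneg_nonpos)
      thus ?thesis using vcv B by linarith
    next
      case 2
      have "c v \<le> c X" using cost_le[OF v 2(2)] .
      hence "c x < k * c X" using 2 k by (smt (verit) mult_left_mono)
      hence "x \<le> Y" using Y[of x] by force
      hence "x * (k * c v) \<le> Y * (k * c X)"
        using x \<open>c v \<le> c X\<close> k cv by (intro mult_mono mult_left_mono) auto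
      thus ?thesis using base vcv unfolding B_def by (simp add: mult.assoc)
    next
      case 3
      have "x * (k * c v) \<le> Y * (k * c v)" using 3 k cv by (intro mult_right_mono) auto
      also have "\<dots> = (Y * k / X) * (X * c v)" using X by (simp add: field_simps)
      also have "\<dots> \<le> A * (v * c v)"
        unfolding A_def using 3 cv X XY k A[unfolded A_def] by (intro mult_mono mult_right_mono) auto
      finally show ?thesis using base B by linarith
    next
      case 4
      have "x * (k * c v - c x) \<le> (k * (4*k) powr (1/q)) * (v * c v)"
        by (rule excess_le_of_power_bounds[OF q k]) (use 4 X XY bounds[of x] bounds[of v] in auto)
      also have "\<dots> \<le> A * (v * c v)" unfolding A_def using cost_nonneg v by (intro mult_right_mono) auto
      finally show ?thesis using B by linarith
    qed
  qed
  thus ?thesis using A B by blast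
qed

lemma eventually_excess_bound_at_right_0:
  assumes F: "F = at_right 0" and q: "0 < q" and k: "1 \<le> k"
  shows "\<exists>A\<ge>0. eventually (\<lambda>M. \<forall>v x. 0 \<le> v \<and> v \<le> M \<and> 0 \<le> x \<and> x \<le> M \<longrightarrow>
           x * (k * c v - c x) \<le> A * (v * c v)) F"
proof -
  obtain b where b: "0 < b" and bounds: "\<And>t. 0 < t \<Longrightarrow> t < b \<Longrightarrow> a/2 * t powr q \<le> c t \<and> c t \<le> 2*a * t powr q"
    using eventually_power_bounds unfolding F eventually_at_right_field by auto
  define A where "A = k * (4*k) powr (1/q)"
  have A: "0 \<le> A" unfolding A_def using k by simp
  have "eventually (\<lambda>M. \<forall>v x. 0 \<le> v \<and> v \<le> M \<and> 0 \<le> x \<and> x \<le> M \<longrightarrow>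
           x * (k * c v - c x) \<le> A * (v * c v)) F"
    unfolding F using eventually_at_right_0_less[OF b]
  proof (eventually_elim, intro allI impI)
    fix M v x assume "0 < M \<and> M < b" "0 \<le> v \<and> v \<le> M \<and> 0 \<le> x \<and> x \<le> M"
    hence Mvx: "0 \<le> v \<and> v \<le> M \<and> 0 \<le> x \<and> x \<le> M \<and> M < b" by simp
    have vcv: "0 \<le> A * (v * c v)" using A cost_nonneg Mvx by simp
    consider "k * c v \<le> c x" | "x = 0" | "c x < k * c v" "0 < x"
      using Mvx by (meson linorder_not_le order_le_less)
    thus "x * (k * c v - c x) \<le> A * (v * c v)"
    proof cases
      case 1
      hence "x * (k * c v - c x) \<le> 0" using Mvx by (simp add: mult_nonneg_nonpos)
      thus ?thesis using vcv by linarith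
    next
      case 3
      have "v \<noteq> 0" using 3 cost_0_at_right_0[OF F q] cost_nonneg[of x] Mvx by force
      thus ?thesis unfolding A_def
        by (intro excess_le_of_power_bounds[OF q k]) (use 3 Mvx bounds[of x] bounds[of v] in auto)
    qed (use vcv in simp)
  qed
  thus ?thesis using A by blast
qed

lemma eventually_excess_le:
  assumes q: "0 < q" and k: "1 \<le> k"
  shows "\<exists>A B. 0 \<le> A \<and> 0 \<le> B \<and> (F = at_right 0 \<longrightarrow> B = 0) \<and>
    eventually (\<lambda>M. \<forall>v x. 0 \<le> v \<and> v \<le> M \<and> 0 \<le> x \<and> x \<le> M \<longrightarrow>
       x * (k * c v - c x) \<le> A * (v * c v) + B) F"
  using F_cases
proof
  assume F: "F = at_top"
  then obtain A B where "0 \<le> A" "0 \<le> B"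
    "\<forall>v x. 0 \<le> v \<longrightarrow> 0 \<le> x \<longrightarrow> x * (k * c v - c x) \<le> A * (v * c v) + B"
    using excess_bound_at_top[OF F q k] by blast
  thus ?thesis using F at_top_neq_at_right_0 by (intro exI[of _ A] exI[of _ B]) auto
next
  assume F: "F = at_right 0"
  then obtain A where "0 \<le> A" "eventually (\<lambda>M. \<forall>v x. 0 \<le> v \<and> v \<le> M \<and> 0 \<le> x \<and> x \<le> M \<longrightarrow>
           x * (k * c v - c x) \<le> A * (v * c v)) F"
    using eventually_excess_bound_at_right_0[OF F q k] by blast
  thus ?thesis by (intro exI[of _ A] exI[of _ 0]) simp
qed

lemma excess_bound_degree_0_at_top:
  assumes F: "F = at_top" and q: "q = 0" and \<epsilon>: "0 < \<epsilon>"
  shows "\<exists>C\<ge>0. \<forall>v x M. 0 \<le> v \<longrightarrow> 0 \<le> x \<longrightarrow> x \<le> M \<longrightarrow> x * (c v - c x) \<le> \<epsilon> * M + C"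
proof -
  have "eventually (\<lambda>t. a - \<epsilon> < c t) at_top"
    using order_tendstoD(1)[OF tendsto_cost_degree_0[OF q], of "a - \<epsilon>"] \<epsilon> F by simp
  then obtain X' where X': "\<And>t. X' \<le> t \<Longrightarrow> a - \<epsilon> < c t" by (auto simp: eventually_at_top_linorder)
  define X where "X = max X' 0"
  have X: "0 \<le> X" unfolding X_def by simp
  have "x * (c v - c x) \<le> \<epsilon> * M + X * a" if vx: "0 \<le> v" "0 \<le> x" "x \<le> M" for v x M
  proof -
    have cv: "c v \<le> a" using cost_le_limit_at_top[OF F q] vx by simp
    have aX: "0 \<le> X * a" "0 \<le> \<epsilon> * M" using X a_pos \<epsilon> vx by simp_all
    show ?thesis
    proof (cases "X \<le> x")
      case True
      hence "a - \<epsilon> < c x" using X' unfolding X_def by simp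
      hence "x * (c v - c x) \<le> x * \<epsilon>" using cv vx by (intro mult_left_mono) auto
      also have "\<dots> \<le> \<epsilon> * M" using vx \<epsilon> by (simp add: mult.commute mult_left_mono)
      finally show ?thesis using aX by linarith
    next
      case False
      have "x * (c v - c x) \<le> x * c v" using cost_nonneg[of x] vx by (intro mult_left_mono) auto
      also have "\<dots> \<le> X * a" using False vx cv cost_nonneg[of v] X by (intro mult_mono) auto
      finally show ?thesis using aX by linarith
    qed
  qed
  thus ?thesis using X a_pos by (intro exI[of _ "X * a"]) auto
qed

lemma eventually_excess_bound_degree_0_at_right_0:
  assumes F: "F = at_right 0" and q: "q = 0" and \<epsilon>: "0 < \<epsilon>"
  shows "eventually (\<lambda>M. \<forall>v x. 0 \<le> v \<and> v \<le> M \<and> 0 \<le> x \<and> x \<le> M \<longrightarrow> x * (c v - c x) \<le> \<epsilon> * M) F"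
proof -
  have "eventually (\<lambda>M. c M < a + \<epsilon>) F"
    using order_tendstoD(2)[OF tendsto_cost_degree_0[OF q], of "a + \<epsilon>"] \<epsilon> by simp
  thus ?thesis
  proof (eventually_elim, intro allI impI)
    fix M v x assume "c M < a + \<epsilon>" "0 \<le> v \<and> v \<le> M \<and> 0 \<le> x \<and> x \<le> M"
    hence Mvx: "c M < a + \<epsilon>" "0 \<le> v" "v \<le> M" "0 \<le> x" "x \<le> M" by auto
    have "c v \<le> c M" using cost_le Mvx by auto
    moreover have "a \<le> c x" using limit_le_cost_at_right_0[OF F q] Mvx by simp
    ultimately have "x * (c v - c x) \<le> x * \<epsilon>" using Mvx by (intro mult_left_mono) auto
    also have "\<dots> \<le> M * \<epsilon>" using Mvx \<epsilon> by (intro mult_right_mono) auto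
    finally show "x * (c v - c x) \<le> \<epsilon> * M" by (simp add: mult.commute)
  qed
qed

lemma eventually_excess_le_degree_0:
  assumes q: "q = 0" and \<epsilon>: "0 < \<epsilon>"
  shows "\<exists>C. 0 \<le> C \<and> (F = at_right 0 \<longrightarrow> C = 0) \<and>
    eventually (\<lambda>M. \<forall>v x. 0 \<le> v \<and> v \<le> M \<and> 0 \<le> x \<and> x \<le> M \<longrightarrow>
       x * (c v - c x) \<le> \<epsilon> * M + C) F"
  using F_cases
proof
  assume F: "F = at_top"
  then obtain C where "0 \<le> C" "\<forall>v x M. 0 \<le> v \<longrightarrow> 0 \<le> x \<longrightarrow> x \<le> M \<longrightarrow> x * (c v - c x) \<le> \<epsilon> * M + C"
    using excess_bound_degree_0_at_top[OF F q \<epsilon>] by blast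
  thus ?thesis using F at_top_neq_at_right_0 by (intro exI[of _ C]) auto
next
  assume F: "F = at_right 0"
  thus ?thesis using eventually_excess_bound_degree_0_at_right_0[OF F q \<epsilon>] by (intro exI[of _ 0]) simp
qed

end

lemma eventually_costs_separated_at_top:
  assumes c1: "power_cost c1 q1 a1 at_top" and c2: "power_cost c2 q2 a2 at_top"
    and q: "q1 < q2" and \<eta>: "0 < \<eta>" "\<eta> \<le> 1"
  shows "eventually (\<lambda>M. \<forall>v v'. \<eta>*M \<le> v \<and> v \<le> M \<and> \<eta>*M \<le> v' \<and> v' \<le> M \<longrightarrow>
     \<not> (\<eta> * c2 v' < c1 v \<and> \<eta> * c1 v < c2 v')) at_top"
proof -
  interpret c1: power_cost c1 q1 a1 at_top by fact
  interpret c2: power_cost c2 q2 a2 at_top by fact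
  define K where "K = 4 * a1 / (a2 * \<eta> * \<eta> powr q2)"
  have r: "0 < q2 - q1" using q by simp
  show ?thesis
    using c1.eventually_power_bounds_scaled[OF \<eta>] c2.eventually_power_bounds_scaled[OF \<eta>]
      eventually_le_powr_at_top[OF r, of K]
  proof (eventually_elim, intro allI impI notI)
    fix M v v' assume M: "0 < M \<and> a1/2 * (\<eta>*M) powr q1 \<le> c1 (\<eta>*M) \<and> c1 M \<le> 2*a1 * M powr q1"
      "0 < M \<and> a2/2 * (\<eta>*M) powr q2 \<le> c2 (\<eta>*M) \<and> c2 M \<le> 2*a2 * M powr q2"
      "K \<le> M powr (q2 - q1)"
      and vv: "\<eta>*M \<le> v \<and> v \<le> M \<and> \<eta>*M \<le> v' \<and> v' \<le> M"
      and bad: "\<eta> * c2 v' < c1 v \<and> \<eta> * c1 v < c2 v'"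
    have \<eta>M: "0 \<le> \<eta>*M" using \<eta> M by simp
    have "c1 v \<le> c1 M" using c1.cost_le vv \<eta>M by auto
    also have "\<dots> \<le> 2*a1 * M powr q1" using M by simp
    also have "\<dots> = \<eta> * ((a2/2) * \<eta> powr q2 * K * M powr q1)"
      unfolding K_def using \<eta> c2.a_pos by (simp add: field_simps)
    also have "\<dots> \<le> \<eta> * ((a2/2) * \<eta> powr q2 * M powr (q2 - q1) * M powr q1)"
      using M \<eta> c2.a_pos by (intro mult_left_mono mult_right_mono) auto
    also have "\<dots> = \<eta> * (a2/2 * (\<eta>*M) powr q2)"
      using M by (simp add: powr_mult algebra_simps flip: powr_add)
    also have "\<dots> \<le> \<eta> * c2 (\<eta>*M)" using M \<eta> by (intro mult_left_mono) auto
    also have "\<dots> \<le> \<eta> * c2 v'" using c2.cost_le vv \<eta>M \<eta> by (intro mult_left_mono) auto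
    finally show False using bad by simp
  qed
qed

lemma eventually_costs_separated_at_right_0:
  assumes c1: "power_cost c1 q1 a1 (at_right 0)" and c2: "power_cost c2 q2 a2 (at_right 0)"
    and q: "q1 < q2" and \<eta>: "0 < \<eta>" "\<eta> \<le> 1"
  shows "eventually (\<lambda>M. \<forall>v v'. \<eta>*M \<le> v \<and> v \<le> M \<and> \<eta>*M \<le> v' \<and> v' \<le> M \<longrightarrow>
     \<not> (\<eta> * c2 v' < c1 v \<and> \<eta> * c1 v < c2 v')) (at_right 0)"
proof -
  interpret c1: power_cost c1 q1 a1 "at_right 0" by fact
  interpret c2: power_cost c2 q2 a2 "at_right 0" by fact
  define K where "K = a1 * \<eta> * \<eta> powr q1 / (4 * a2)"
  have r: "0 < q2 - q1" using q by simp
  have K: "0 < K" unfolding K_def using c1.a_pos c2.a_pos \<eta> by simp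
  show ?thesis
    using c1.eventually_power_bounds_scaled[OF \<eta>] c2.eventually_power_bounds_scaled[OF \<eta>]
      eventually_powr_le_at_right_0[OF r K]
  proof (eventually_elim, intro allI impI notI)
    fix M v v' assume M: "0 < M \<and> a1/2 * (\<eta>*M) powr q1 \<le> c1 (\<eta>*M) \<and> c1 M \<le> 2*a1 * M powr q1"
      "0 < M \<and> a2/2 * (\<eta>*M) powr q2 \<le> c2 (\<eta>*M) \<and> c2 M \<le> 2*a2 * M powr q2"
      "M powr (q2 - q1) \<le> K"
      and vv: "\<eta>*M \<le> v \<and> v \<le> M \<and> \<eta>*M \<le> v' \<and> v' \<le> M"
      and bad: "\<eta> * c2 v' < c1 v \<and> \<eta> * c1 v < c2 v'"
    have \<eta>M: "0 \<le> \<eta>*M" using \<eta> M by simp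
    have "c2 v' \<le> c2 M" using c2.cost_le vv \<eta>M by auto
    also have "\<dots> \<le> 2*a2 * M powr q2" using M by simp
    also have "\<dots> = 2*a2 * (M powr (q2 - q1) * M powr q1)" using M by (simp flip: powr_add)
    also have "\<dots> \<le> 2*a2 * (K * M powr q1)"
      using M c2.a_pos by (intro mult_left_mono mult_right_mono) auto
    also have "\<dots> = \<eta> * (a1/2 * (\<eta>*M) powr q1)"
      unfolding K_def using c2.a_pos by (simp add: powr_mult field_simps)
    also have "\<dots> \<le> \<eta> * c1 (\<eta>*M)" using M \<eta> by (intro mult_left_mono) auto
    also have "\<dots> \<le> \<eta> * c1 v" using c1.cost_le vv \<eta>M \<eta> by (intro mult_left_mono) auto
    finally show False using bad by simp
  qed
qed

lemma eventually_costs_separated: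
  assumes "power_cost c1 q1 a1 F" "power_cost c2 q2 a2 F" "q1 < q2" "0 < \<eta>" "\<eta> \<le> 1"
  shows "eventually (\<lambda>M. \<forall>v v'. \<eta>*M \<le> v \<and> v \<le> M \<and> \<eta>*M \<le> v' \<and> v' \<le> M \<longrightarrow>
     \<not> (\<eta> * c2 v' < c1 v \<and> \<eta> * c1 v < c2 v')) F"
  using power_cost.F_cases[OF assms(1)]
proof
  assume "F = at_top"
  thus ?thesis using eventually_costs_separated_at_top assms by blast
next
  assume "F = at_right 0"
  thus ?thesis using eventually_costs_separated_at_right_0 assms by blast
qed

lemma eventually_excess_le_mixed_degree:
  assumes c1: "power_cost c1 q1 a1 F" and c2: "power_cost c2 q2 a2 F"
    and q1: "q1 = 0" and q2: "0 < q2" and \<eta>: "0 < \<eta>" "\<eta> \<le> 1" and \<epsilon>: "0 < \<epsilon>"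
  shows "eventually (\<lambda>M. \<forall>x v D. 0 \<le> x \<and> x \<le> M \<and> 0 \<le> v \<and> \<eta> * D \<le> c2 M \<longrightarrow>
     x * ((q2+1) * min (c1 v) D - c1 x) \<le> \<epsilon> * M * c2 (\<eta>*M)) F"
proof -
  interpret c1: power_cost c1 q1 a1 F by fact
  interpret c2: power_cost c2 q2 a2 F by fact
  show ?thesis using c1.F_cases
  proof
    assume F: "F = at_top"
    show ?thesis using c2.eventually_ge_cost_at_top[OF F q2 \<eta>, of "(q2+1) * a1 / \<epsilon>"] c1.eventually_pos
    proof (eventually_elim, intro allI impI)
      fix M x v D :: real assume M: "(q2+1) * a1 / \<epsilon> \<le> c2 (\<eta>*M)" "0 < M"
        and h: "0 \<le> x \<and> x \<le> M \<and> 0 \<le> v \<and> \<eta> * D \<le> c2 M"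
      have "(q2+1) * min (c1 v) D \<le> (q2+1) * c1 v" using q2 by (intro mult_left_mono) auto
      hence "x * ((q2+1) * min (c1 v) D - c1 x) \<le> x * ((q2+1) * c1 v)"
        using c1.cost_nonneg[of x] h by (intro mult_left_mono) auto
      also have "\<dots> \<le> M * ((q2+1) * a1)"
        using h q2 c1.cost_le_limit_at_top[OF F q1] c1.cost_nonneg[of v] by (intro mult_mono mult_left_mono) auto
      also have "\<dots> = \<epsilon> * M * ((q2+1) * a1 / \<epsilon>)" using \<epsilon> by simp
      also have "\<dots> \<le> \<epsilon> * M * c2 (\<eta>*M)" using M \<epsilon> by (intro mult_left_mono) auto
      finally show "x * ((q2+1) * min (c1 v) D - c1 x) \<le> \<epsilon> * M * c2 (\<eta>*M)" .
    qed
  next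
    assume F: "F = at_right 0"
    have K: "0 < \<eta> * a1 / (q2+1)" using \<eta> c1.a_pos q2 by simp
    show ?thesis using c2.eventually_cost_le_at_right_0[OF F q2 K] c1.eventually_pos
    proof (eventually_elim, intro allI impI)
      fix M x v D :: real assume M: "c2 M \<le> \<eta> * a1 / (q2+1)" "0 < M"
        and h: "0 \<le> x \<and> x \<le> M \<and> 0 \<le> v \<and> \<eta> * D \<le> c2 M"
      have "\<eta> * D \<le> \<eta> * (a1 / (q2+1))" using h M by simp
      hence "D \<le> a1 / (q2+1)" by (rule mult_left_le_imp_le[OF _ \<eta>(1)])
      hence "(q2+1) * D \<le> a1" using q2 by (simp add: field_simps)
      hence "(q2+1) * min (c1 v) D \<le> c1 x"
        using c1.limit_le_cost_at_right_0[OF F q1, of x] h q2 by (smt (verit) min.cobounded2 mult_left_mono)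
      hence "x * ((q2+1) * min (c1 v) D - c1 x) \<le> 0" using h by (simp add: mult_nonneg_nonpos)
      also have "0 \<le> \<epsilon> * M * c2 (\<eta>*M)" using \<epsilon> M \<eta> c2.cost_nonneg[of "\<eta>*M"] by simp
      finally show "x * ((q2+1) * min (c1 v) D - c1 x) \<le> \<epsilon> * M * c2 (\<eta>*M)" .
    qed
  qed
qed

section \<open>Heavy and light traffic\<close>

context routing_game
begin

lemma Opt_le_social_cost:
  assumes g: "feasible I Paths m g"
  shows "Opt E I Paths c m \<le> social_cost E P c g"
  unfolding Opt_def
  by (rule cInf_lower) (use g social_cost_nonneg in \<open>auto intro!: bdd_belowI\<close>)

lemma le_Opt:
  assumes "feasible I Paths m f" and "\<And>g. feasible I Paths m g \<Longrightarrow> L \<le> social_cost E P c g"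
  shows "L \<le> Opt E I Paths c m"
  unfolding Opt_def by (rule cInf_greatest) (use assms in auto)

lemma Eq_wardrop:
  assumes m: "\<And>i. i \<in> I \<Longrightarrow> 0 \<le> m i"
  obtains f where "wardrop I Paths c m f" "Eq E I Paths c m = social_cost E P c f"
proof -
  have "\<exists>f. wardrop I Paths c m f" using wardrop_exists[of m] m by blast
  from someI_ex[OF this] show thesis using that unfolding Eq_def by blast
qed

lemma PoA_bounds_of_near_optimal:
  assumes m: "\<And>i. i \<in> I \<Longrightarrow> 0 \<le> m i" and \<mu>: "\<And>i. i \<in> I \<Longrightarrow> \<mu> \<le> m i"
    and r: "0 < r" "r \<le> 1/2"
    and near: "\<And>f g. wardrop I Paths c m f \<Longrightarrow> feasible I Paths m g \<Longrightarrow>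
                 social_cost E P c f - r * \<mu> * max_od_cost f \<le> social_cost E P c g"
  shows "1 \<le> PoA E I Paths c m" "PoA E I Paths c m \<le> 1 + 2 * r"
proof -
  obtain f where w: "wardrop I Paths c m f" and Eq: "Eq E I Paths c m = social_cost E P c f"
    using Eq_wardrop[of m] m by blast
  have feas: "feasible I Paths m f" using w unfolding wardrop_def by simp
  let ?Eq = "social_cost E P c f" and ?Opt = "Opt E I Paths c m"
  have upper: "?Opt \<le> ?Eq" using Opt_le_social_cost[OF feas] .
  have "?Eq - r * \<mu> * max_od_cost f \<le> ?Opt" using le_Opt[OF feas near[OF w]] .
  moreover have "r * (\<mu> * max_od_cost f) \<le> r * ?Eq"
    using max_od_cost_le_social_cost[OF w m \<mu>] r by (intro mult_left_mono) auto
  ultimately have lower: "(1 - r) * ?Eq \<le> ?Opt" by (simp add: algebra_simps)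
  show "1 \<le> PoA E I Paths c m" "PoA E I Paths c m \<le> 1 + 2 * r"
  proof (atomize (full), cases "0 < ?Opt")
    case True
    have Eq_pos: "0 < ?Eq" using True upper by linarith
    have "?Eq / ?Opt \<le> ?Eq / ((1 - r) * ?Eq)"
      using lower True Eq_pos r by (intro divide_left_mono) auto
    also have "\<dots> = 1 / (1 - r)" using Eq_pos r by simp
    also have "\<dots> \<le> 1 + 2 * r" using r by (simp add: field_simps mult_left_mono)
    finally show "1 \<le> PoA E I Paths c m \<and> PoA E I Paths c m \<le> 1 + 2 * r"
      using upper True unfolding PoA_def Eq by simp
  qed (use r in \<open>simp add: PoA_def\<close>)
qed

end

locale scaled_routing_game = routing_game E I Paths c
  for E :: "'e set" and I :: "'i set" and Paths c +
  fixes q a :: "'e \<Rightarrow> real" and F :: "real filter" and lam :: "'i \<Rightarrow> real"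
  assumes F_cases: "F = at_top \<or> F = at_right 0"
    and q_nonneg: "\<And>e. e \<in> E \<Longrightarrow> 0 \<le> q e" and a_pos: "\<And>e. e \<in> E \<Longrightarrow> 0 < a e"
    and tendsto_power: "\<And>e. e \<in> E \<Longrightarrow> ((\<lambda>x. c e x / x powr q e) \<longlongrightarrow> a e) F"
    and lam_pos: "\<And>i. i \<in> I \<Longrightarrow> 0 < lam i" and lam_sum: "sum lam I = 1"
begin

lemma power_cost: "e \<in> E \<Longrightarrow> power_cost (c e) (q e) (a e) F"
  by unfold_locales (use F_cases cost_continuous cost_mono cost_nonneg q_nonneg a_pos tendsto_power in auto)

lemma sum_demand: "(\<Sum>i\<in>I. lam i * M) = M"
  using lam_sum by (simp add: sum_distrib_right[symmetric])

lemma excess_constants: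
  assumes K: "1 \<le> K" and \<epsilon>: "0 < \<epsilon>"
  shows "\<exists>A B. \<forall>e\<in>E. 0 \<le> A e \<and> 0 \<le> B e \<and> (F = at_right 0 \<longrightarrow> B e = 0) \<and>
     eventually (\<lambda>M. \<forall>v x. 0 \<le> v \<and> v \<le> M \<and> 0 \<le> x \<and> x \<le> M \<longrightarrow>
        (0 < q e \<longrightarrow> x * (K * c e v - c e x) \<le> A e * (v * c e v) + B e) \<and>
        (q e = 0 \<longrightarrow> x * (c e v - c e x) \<le> \<epsilon> * M + B e)) F"
proof -
  define Q where "Q e A B \<longleftrightarrow> 0 \<le> A \<and> 0 \<le> B \<and> (F = at_right 0 \<longrightarrow> B = 0) \<and>
     eventually (\<lambda>M. \<forall>v x. 0 \<le> v \<and> v \<le> M \<and> 0 \<le> x \<and> x \<le> M \<longrightarrow>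
        (0 < q e \<longrightarrow> x * (K * c e v - c e x) \<le> A * (v * c e v) + B) \<and>
        (q e = 0 \<longrightarrow> x * (c e v - c e x) \<le> \<epsilon> * M + B)) F" for e A B
  have "\<exists>AB. Q e (fst AB) (snd AB)" if e: "e \<in> E" for e
  proof (cases "0 < q e")
    case True
    then obtain A B where "0 \<le> A" "0 \<le> B" "F = at_right 0 \<longrightarrow> B = 0"
      "eventually (\<lambda>M. \<forall>v x. 0 \<le> v \<and> v \<le> M \<and> 0 \<le> x \<and> x \<le> M \<longrightarrow>
         x * (K * c e v - c e x) \<le> A * (v * c e v) + B) F"
      using power_cost.eventually_excess_le[OF power_cost[OF e] True K] by blast
    hence "Q e A B" unfolding Q_def using True by (auto elim: eventually_mono)
    thus ?thesis by (intro exI[of _ "(A, B)"]) simp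
  next
    case False
    hence q: "q e = 0" using q_nonneg[OF e] by simp
    then obtain C where "0 \<le> C" "F = at_right 0 \<longrightarrow> C = 0"
      "eventually (\<lambda>M. \<forall>v x. 0 \<le> v \<and> v \<le> M \<and> 0 \<le> x \<and> x \<le> M \<longrightarrow>
         x * (c e v - c e x) \<le> \<epsilon> * M + C) F"
      using power_cost.eventually_excess_le_degree_0[OF power_cost[OF e] q \<epsilon>] by blast
    hence "Q e 0 C" unfolding Q_def using q by (auto elim: eventually_mono)
    thus ?thesis by (intro exI[of _ "(0, C)"]) simp
  qed
  hence "\<forall>e\<in>E. \<exists>AB. Q e (fst AB) (snd AB)" by blast
  from bchoice[OF this] obtain AB where "\<forall>e\<in>E. Q e (fst (AB e)) (snd (AB e))" by blast
  thus ?thesis unfolding Q_def by (intro exI[of _ "fst \<circ> AB"] exI[of _ "snd \<circ> AB"]) simp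
qed

text \<open>The estimates on the edge costs at total demand \<open>M\<close> that the comparison of the
  equilibrium with an arbitrary feasible flow uses; each of them holds eventually.\<close>

definition estimates_at ::
  "real \<Rightarrow> real \<Rightarrow> real \<Rightarrow> real \<Rightarrow> ('e \<Rightarrow> real) \<Rightarrow> ('e \<Rightarrow> real) \<Rightarrow> real \<Rightarrow> bool" where
  "estimates_at \<eta> \<epsilon> \<epsilon>' K A B M \<longleftrightarrow>
     (\<forall>e\<in>E. \<forall>e'\<in>E. q e < q e' \<longrightarrow> (\<forall>v v'. \<eta>*M \<le> v \<and> v \<le> M \<and> \<eta>*M \<le> v' \<and> v' \<le> M \<longrightarrow>
        \<not> (\<eta> * c e' v' < c e v \<and> \<eta> * c e v < c e' v'))) \<and>
     (\<forall>e\<in>E. \<forall>v x. \<eta>*M \<le> v \<and> v \<le> M \<and> 0 \<le> x \<and> x \<le> M \<longrightarrow>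
        (q e + 1) * c e v * (x - v) - x * c e x + v * c e v \<le> \<epsilon> * M * c e (\<eta>*M)) \<and>
     (\<forall>e\<in>E. \<forall>v x. 0 \<le> v \<and> v \<le> M \<and> 0 \<le> x \<and> x \<le> M \<longrightarrow>
        (0 < q e \<longrightarrow> x * (K * c e v - c e x) \<le> A e * (v * c e v) + B e) \<and>
        (q e = 0 \<longrightarrow> x * (c e v - c e x) \<le> \<epsilon>' * M + B e)) \<and>
     (\<forall>e\<in>E. q e = 0 \<longrightarrow> \<epsilon>' \<le> \<epsilon> * c e (\<eta>*M)) \<and>
     (\<forall>e\<in>E. sum B E \<le> \<epsilon> * M * c e (\<eta>*M)) \<and>
     (\<forall>e\<in>E. \<forall>e0\<in>E. q e = 0 \<longrightarrow> 0 < q e0 \<longrightarrow>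
        (\<forall>x v D. 0 \<le> x \<and> x \<le> M \<and> 0 \<le> v \<and> \<eta> * D \<le> c e0 M \<longrightarrow>
           x * ((q e0 + 1) * min (c e v) D - c e x) \<le> \<epsilon> * M * c e0 (\<eta>*M)))"

lemma eventually_estimates_at:
  assumes \<eta>: "0 < \<eta>" "\<eta> \<le> 1" and \<epsilon>: "0 < \<epsilon>" and \<epsilon>': "\<forall>e\<in>E. \<epsilon>' \<le> \<epsilon> * a e / 2"
    and AB: "\<forall>e\<in>E. 0 \<le> B e \<and> (F = at_right 0 \<longrightarrow> B e = 0) \<and>
     eventually (\<lambda>M. \<forall>v x. 0 \<le> v \<and> v \<le> M \<and> 0 \<le> x \<and> x \<le> M \<longrightarrow>
        (0 < q e \<longrightarrow> x * (K * c e v - c e x) \<le> A e * (v * c e v) + B e) \<and>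
        (q e = 0 \<longrightarrow> x * (c e v - c e x) \<le> \<epsilon>' * M + B e)) F"
  shows "eventually (estimates_at \<eta> \<epsilon> \<epsilon>' K A B) F"
  unfolding estimates_at_def eventually_conj_iff eventually_ball_finite_distrib[OF finite_E]
proof (intro conjI ballI eventually_const_implies)
  fix e e' assume "e \<in> E" "e' \<in> E" "q e < q e'"
  from eventually_costs_separated[OF power_cost[OF this(1)] power_cost[OF this(2)] this(3) \<eta>]
  show "eventually (\<lambda>M. \<forall>v v'. \<eta>*M \<le> v \<and> v \<le> M \<and> \<eta>*M \<le> v' \<and> v' \<le> M \<longrightarrow>
      \<not> (\<eta> * c e' v' < c e v \<and> \<eta> * c e v < c e' v')) F" .
next
  fix e assume "e \<in> E"
  from power_cost.eventually_linearization_defect_le[OF power_cost[OF this] \<eta> \<epsilon>]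
  show "eventually (\<lambda>M. \<forall>v x. \<eta>*M \<le> v \<and> v \<le> M \<and> 0 \<le> x \<and> x \<le> M \<longrightarrow>
      (q e + 1) * c e v * (x - v) - x * c e x + v * c e v \<le> \<epsilon> * M * c e (\<eta>*M)) F" .
next
  fix e assume e: "e \<in> E" and q: "q e = 0"
  show "eventually (\<lambda>M. \<epsilon>' \<le> \<epsilon> * c e (\<eta>*M)) F"
    using power_cost.eventually_power_bounds_scaled[OF power_cost[OF e] \<eta>]
  proof eventually_elim
    case (elim M)
    hence "a e / 2 \<le> c e (\<eta>*M)" using q \<eta> by (simp split: if_splits)
    hence "\<epsilon> * (a e / 2) \<le> \<epsilon> * c e (\<eta>*M)" using \<epsilon> by (intro mult_left_mono) auto
    moreover have "\<epsilon>' \<le> \<epsilon> * (a e / 2)" using \<epsilon>' e by simp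
    ultimately show ?case by linarith
  qed
next
  fix e assume "e \<in> E"
  have "0 \<le> sum B E" "F = at_right 0 \<longrightarrow> sum B E = 0" using AB by (auto intro: sum_nonneg)
  from power_cost.eventually_le_scaled_cost[OF power_cost[OF \<open>e \<in> E\<close>] this \<eta> \<epsilon>]
  show "eventually (\<lambda>M. sum B E \<le> \<epsilon> * M * c e (\<eta>*M)) F" .
next
  fix e e0 assume "e \<in> E" "e0 \<in> E" "q e = 0" "0 < q e0"
  from eventually_excess_le_mixed_degree[OF power_cost[OF this(1)] power_cost[OF this(2)] this(3,4) \<eta> \<epsilon>]
  show "eventually (\<lambda>M. \<forall>x v D. 0 \<le> x \<and> x \<le> M \<and> 0 \<le> v \<and> \<eta> * D \<le> c e0 M \<longrightarrow>
      x * ((q e0 + 1) * min (c e v) D - c e x) \<le> \<epsilon> * M * c e0 (\<eta>*M)) F" .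
qed (use AB in blast)

lemma heavy_edge_defect_le:
  assumes w: "wardrop I Paths c (\<lambda>i. lam i * M) f" and g: "feasible I Paths (\<lambda>i. lam i * M) g"
    and \<eta>: "0 < \<eta>" and \<epsilon>: "0 < \<epsilon>" and est: "estimates_at \<eta> \<epsilon> \<epsilon>' K A B M"
    and e: "e \<in> E" "heavy_edge \<eta> M f e"
  shows "defect (q e + 1) f g e \<le> \<epsilon> * M * max_od_cost f"
proof -
  let ?v = "load P f e" and ?x = "load P g e"
  have feas: "feasible I Paths (\<lambda>i. lam i * M) f" using w unfolding wardrop_def by simp
  note b = heavy_edge_bounds[OF w sum_demand e(1) less_imp_le[OF \<eta>] e(2)]
  have "0 \<le> M" using load_nonneg[OF feas, of e] load_le_total_demand[OF feas, of e] sum_demand by simp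
  hence M: "0 \<le> \<eta> * M" "0 \<le> M" using \<eta> by simp_all
  have "defect (q e + 1) f g e = (q e + 1) * c e ?v * (?x - ?v) - ?x * c e ?x + ?v * c e ?v"
    using b(1) unfolding defect_def truncated_cost_def by simp
  also have "\<dots> \<le> \<epsilon> * M * c e (\<eta>*M)"
    using est e(1) b(2) load_nonneg[OF g, of e] load_le_total_demand[OF feas, of e]
      load_le_total_demand[OF g, of e] sum_demand unfolding estimates_at_def by auto
  also have "\<dots> \<le> \<epsilon> * M * max_od_cost f"
    using cost_le[OF e(1) M(1), of ?v] b(1,2) \<epsilon> M by (intro mult_left_mono) auto
  finally show ?thesis .
qed

lemma light_edge_defect_le:
  assumes w: "wardrop I Paths c (\<lambda>i. lam i * M) f" and g: "feasible I Paths (\<lambda>i. lam i * M) g"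
    and M: "0 < M" and \<eta>: "0 < \<eta>" "\<eta> \<le> 1" and \<epsilon>: "0 < \<epsilon>" and est: "estimates_at \<eta> \<epsilon> \<epsilon>' K A B M"
    and e: "e \<in> E" "\<not> heavy_edge \<eta> M f e" and e0: "e0 \<in> E" "heavy_edge \<eta> M f e0"
    and K: "q e0 + 1 \<le> K" and AB: "0 \<le> A e" "0 \<le> B e"
  shows "defect (q e0 + 1) f g e \<le> (A e * \<eta> + \<epsilon>) * M * max_od_cost f + B e"
proof -
  let ?v = "load P f e" and ?x = "load P g e" and ?D = "max_od_cost f"
  have feas: "feasible I Paths (\<lambda>i. lam i * M) f" using w unfolding wardrop_def by simp
  have v: "0 \<le> ?v" "?v \<le> M" using load_nonneg[OF feas] load_le_total_demand[OF feas] sum_demand by auto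
  have x: "0 \<le> ?x" "?x \<le> M" using load_nonneg[OF g] load_le_total_demand[OF g] sum_demand by auto
  have D: "0 \<le> ?D" using max_od_cost_nonneg[OF feas] .
  have light: "?v * c e ?v \<le> \<eta> * M * ?D" using e(2) unfolding heavy_edge_def by simp
  note b0 = heavy_edge_bounds[OF w sum_demand e0(1) less_imp_le[OF \<eta>(1)] e0(2)]
  have c0: "c e0 (\<eta>*M) \<le> ?D" using cost_le[OF e0(1), of "\<eta>*M" "load P f e0"] b0 \<eta> M by simp
  have extra: "0 \<le> A e * \<eta> * M * ?D" "0 \<le> \<epsilon> * M * ?D" using AB \<eta> M D \<epsilon> by simp_all
  have "defect (q e0 + 1) f g e \<le> ?x * ((q e0 + 1) * truncated_cost f e - c e ?x)"
    using defect_le_excess[OF w g e(1)] q_nonneg[OF e0(1)] by simp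
  also have "\<dots> \<le> (A e * \<eta> + \<epsilon>) * M * ?D + B e"
  proof (cases "0 < q e")
    case True
    have "(q e0 + 1) * truncated_cost f e \<le> K * c e ?v"
      using K q_nonneg[OF e0(1)] truncated_cost_nonneg[OF feas e(1)] cost_nonneg[OF e(1) v(1)]
      unfolding truncated_cost_def by (intro mult_mono) auto
    hence "?x * ((q e0 + 1) * truncated_cost f e - c e ?x) \<le> ?x * (K * c e ?v - c e ?x)"
      using x by (intro mult_left_mono) auto
    also have "\<dots> \<le> A e * (?v * c e ?v) + B e"
      using est e(1) True v x unfolding estimates_at_def by blast
    also have "\<dots> \<le> A e * (\<eta> * M * ?D) + B e" using light AB by (simp add: mult_left_mono)
    finally show ?thesis using extra by (simp add: algebra_simps)
  next
    case False
    hence q: "q e = 0" using q_nonneg[OF e(1)] by simp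
    show ?thesis
    proof (cases "q e0 = 0")
      case True
      have "?x * ((q e0 + 1) * truncated_cost f e - c e ?x) \<le> ?x * (c e ?v - c e ?x)"
        using x True unfolding truncated_cost_def by (intro mult_left_mono) auto
      also have "\<dots> \<le> \<epsilon>' * M + B e" using est e(1) q v x unfolding estimates_at_def by blast
      also have "\<dots> \<le> \<epsilon> * c e0 (\<eta>*M) * M + B e"
        using est e0(1) True M unfolding estimates_at_def by simp
      also have "\<dots> \<le> \<epsilon> * ?D * M + B e" using c0 \<epsilon> M by (simp add: mult_left_mono)
      finally show ?thesis using extra by (simp add: algebra_simps)
    next
      case False
      hence "0 < q e0" using q_nonneg[OF e0(1)] by simp
      moreover have "c e0 (load P f e0) \<le> c e0 M"
        using cost_le[OF e0(1) load_nonneg[OF feas] load_le_total_demand[OF feas]] sum_demand by simp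
      hence "\<eta> * ?D \<le> c e0 M" using b0(3) by linarith
      ultimately have "?x * ((q e0 + 1) * truncated_cost f e - c e ?x) \<le> \<epsilon> * M * c e0 (\<eta>*M)"
        using est e(1) e0(1) q x v unfolding estimates_at_def truncated_cost_def by blast
      also have "\<dots> \<le> \<epsilon> * M * ?D" using c0 \<epsilon> M by (simp add: mult_left_mono)
      finally show ?thesis using extra AB by (simp add: algebra_simps)
    qed
  qed
  finally show ?thesis .
qed

lemma edge_defect_le:
  assumes w: "wardrop I Paths c (\<lambda>i. lam i * M) f" and g: "feasible I Paths (\<lambda>i. lam i * M) g"
    and M: "0 < M" and \<eta>: "0 < \<eta>" "\<eta> \<le> 1" and \<epsilon>: "0 < \<epsilon>" and est: "estimates_at \<eta> \<epsilon> \<epsilon>' K A B M"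
    and e: "e \<in> E" and e0: "e0 \<in> E" "heavy_edge \<eta> M f e0"
    and K: "q e0 + 1 \<le> K" and AB: "0 \<le> A e" "0 \<le> B e"
  shows "defect (q e0 + 1) f g e \<le> (A e * \<eta> + \<epsilon>) * M * max_od_cost f + B e"
proof (cases "heavy_edge \<eta> M f e")
  case True
  have "q e = q e0"
    by (rule heavy_edges_same_degree[OF w sum_demand \<eta> _ e True e0])
       (insert est, unfold estimates_at_def, blast)
  hence "defect (q e0 + 1) f g e \<le> \<epsilon> * M * max_od_cost f"
    using heavy_edge_defect_le[OF w g \<eta>(1) \<epsilon> est e True] by simp
  moreover have "0 \<le> max_od_cost f" using max_od_cost_nonneg w unfolding wardrop_def by blast
  hence "0 \<le> A e * \<eta> * M * max_od_cost f" using AB \<eta> M by simp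
  ultimately show ?thesis using AB by (simp add: algebra_simps)
qed (rule light_edge_defect_le[OF w g M \<eta> \<epsilon> est e _ e0 K AB])

lemma wardrop_near_optimal_at:
  assumes w: "wardrop I Paths c (\<lambda>i. lam i * M) f" and g: "feasible I Paths (\<lambda>i. lam i * M) g"
    and M: "0 < M" and \<eta>: "0 < \<eta>" "\<eta> \<le> 1" and \<epsilon>: "0 < \<epsilon>" and est: "estimates_at \<eta> \<epsilon> \<epsilon>' K A B M"
    and \<mu>: "\<forall>i\<in>I. \<mu> \<le> lam i" "real (card E) * \<eta> < \<mu>"
    and K: "\<forall>e\<in>E. q e + 1 \<le> K" and AB: "\<forall>e\<in>E. 0 \<le> A e \<and> 0 \<le> B e"
  shows "social_cost E P c f - (sum A E * \<eta> + (real (card E) + 1) * \<epsilon>) * M * max_od_cost f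
           \<le> social_cost E P c g"
proof (cases "max_od_cost f = 0")
  case True
  have "0 \<le> lam i * M" if "i \<in> I" for i using lam_pos[OF that] M by simp
  thus ?thesis using True social_cost_le_max_od_cost[OF w] social_cost_nonneg[OF g] by simp
next
  case False
  let ?D = "max_od_cost f"
  have m: "0 \<le> lam i * M" "\<mu> * M \<le> lam i * M" if "i \<in> I" for i
    using lam_pos[OF that] \<mu>(1) that M by (simp_all add: mult_right_mono)
  have D: "0 < ?D" using False max_od_cost_nonneg w unfolding wardrop_def by force
  have "real (card E) * \<eta> * M < \<mu> * M" using \<mu>(2) M by simp
  then obtain e0 where e0: "e0 \<in> E" "heavy_edge \<eta> M f e0"
    using exists_heavy_edge[OF w m D] by blast
  have "(\<Sum>e\<in>E. defect (q e0 + 1) f g e) \<le> (\<Sum>e\<in>E. (A e * \<eta> + \<epsilon>) * M * ?D + B e)"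
    using edge_defect_le[OF w g M \<eta> \<epsilon> est _ e0] K AB e0(1) by (intro sum_mono) blast
  also have "\<dots> = (sum A E * \<eta> + real (card E) * \<epsilon>) * M * ?D + sum B E"
    by (simp add: sum.distrib sum_distrib_left[symmetric] sum_distrib_right[symmetric] algebra_simps)
  also have "\<dots> \<le> (sum A E * \<eta> + (real (card E) + 1) * \<epsilon>) * M * ?D"
  proof -
    have "sum B E \<le> \<epsilon> * M * c e0 (\<eta>*M)" using est e0(1) unfolding estimates_at_def by blast
    also have "\<dots> \<le> \<epsilon> * M * ?D"
      using heavy_edge_bounds[OF w sum_demand e0(1) less_imp_le[OF \<eta>(1)] e0(2)] \<eta> M \<epsilon>
        cost_le[OF e0(1), of "\<eta>*M" "load P f e0"] by (simp add: mult_left_mono)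
    finally show ?thesis by (simp add: algebra_simps)
  qed
  finally show ?thesis
    using social_cost_ge_minus_defects[OF w g, of "q e0 + 1"] q_nonneg[OF e0(1)] by simp
qed

lemma eventually_wardrop_near_optimal:
  assumes \<theta>: "0 < \<theta>"
  shows "eventually (\<lambda>M. \<forall>f g. wardrop I Paths c (\<lambda>i. lam i * M) f \<longrightarrow>
            feasible I Paths (\<lambda>i. lam i * M) g \<longrightarrow>
            social_cost E P c f - \<theta> * M * max_od_cost f \<le> social_cost E P c g) F"
proof -
  define n where "n = real (card E)"
  have n: "0 \<le> n" unfolding n_def by simp
  define \<mu> where "\<mu> = Min (lam ` I)"
  have \<mu>: "\<forall>i\<in>I. \<mu> \<le> lam i" "0 < \<mu>"
    unfolding \<mu>_def using finite_I I_nonempty lam_pos by (auto simp: Min_gr_iff)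
  define K where "K = 1 + (\<Sum>e\<in>E. q e)"
  have K: "\<forall>e\<in>E. q e + 1 \<le> K" "1 \<le> K"
    unfolding K_def using finite_E q_nonneg by (auto intro: member_le_sum sum_nonneg)
  define \<epsilon> where "\<epsilon> = \<theta> / (2 * (n + 1))"
  define \<epsilon>' where "\<epsilon>' = \<epsilon> * Min (insert 1 (a ` E)) / 2"
  have \<epsilon>: "0 < \<epsilon>" "0 < \<epsilon>'"
    unfolding \<epsilon>'_def \<epsilon>_def using \<theta> n finite_E a_pos by (auto simp: Min_gr_iff)
  have "\<forall>e\<in>E. \<epsilon>' \<le> \<epsilon> * a e / 2"
    unfolding \<epsilon>'_def using finite_E \<epsilon>(1) by (auto intro: mult_left_mono divide_right_mono)
  note \<epsilon> = \<epsilon> this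
  obtain A B where AB: "\<forall>e\<in>E. 0 \<le> A e \<and> 0 \<le> B e \<and> (F = at_right 0 \<longrightarrow> B e = 0) \<and>
     eventually (\<lambda>M. \<forall>v x. 0 \<le> v \<and> v \<le> M \<and> 0 \<le> x \<and> x \<le> M \<longrightarrow>
        (0 < q e \<longrightarrow> x * (K * c e v - c e x) \<le> A e * (v * c e v) + B e) \<and>
        (q e = 0 \<longrightarrow> x * (c e v - c e x) \<le> \<epsilon>' * M + B e)) F"
    using excess_constants[OF K(2) \<epsilon>(2)] by blast
  have A: "0 \<le> sum A E" using AB by (auto intro: sum_nonneg)
  define \<eta> where "\<eta> = min 1 (min (\<mu> / (2 * (n + 1))) (\<theta> / (2 * (sum A E + 1))))"
  have \<eta>: "0 < \<eta>" "\<eta> \<le> 1" unfolding \<eta>_def using \<mu> \<theta> n A by auto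
  have "n * \<eta> \<le> n * (\<mu> / (2 * (n + 1)))" unfolding \<eta>_def using n by (intro mult_left_mono) auto
  also have "\<dots> < \<mu>" using n \<mu>(2) by (simp add: field_simps add_nonneg_pos)
  finally have n\<eta>: "n * \<eta> < \<mu>" .
  have "sum A E * \<eta> \<le> sum A E * (\<theta> / (2 * (sum A E + 1)))" unfolding \<eta>_def using A by (intro mult_left_mono) auto
  also have "\<dots> \<le> \<theta> / 2" using A \<theta> by (simp add: field_simps)
  moreover have "(n + 1) * \<epsilon> = \<theta> / 2" unfolding \<epsilon>_def using n by (simp add: field_simps)
  ultimately have coeff: "sum A E * \<eta> + (n + 1) * \<epsilon> \<le> \<theta>" by linarith
  from eventually_estimates_at[OF \<eta> \<epsilon>(1) \<epsilon>(3), of B K A] AB eventually_pos_at_top_or_at_right_0[OF F_cases]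
  have "eventually (\<lambda>M. estimates_at \<eta> \<epsilon> \<epsilon>' K A B M \<and> 0 < M) F"
    by (simp add: eventually_conj_iff)
  thus ?thesis
  proof (eventually_elim, intro allI impI)
    fix M f g assume M: "estimates_at \<eta> \<epsilon> \<epsilon>' K A B M \<and> 0 < M"
      and w: "wardrop I Paths c (\<lambda>i. lam i * M) f" and g: "feasible I Paths (\<lambda>i. lam i * M) g"
    have "social_cost E P c f - (sum A E * \<eta> + (n + 1) * \<epsilon>) * M * max_od_cost f \<le> social_cost E P c g"
      unfolding n_def
      by (rule wardrop_near_optimal_at[OF w g _ \<eta> \<epsilon>(1) _ \<mu>(1)]) (use M n\<eta> K AB in \<open>auto simp: n_def\<close>)
    moreover have "(sum A E * \<eta> + (n + 1) * \<epsilon>) * M * max_od_cost f \<le> \<theta> * M * max_od_cost f"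
      using coeff M max_od_cost_nonneg w unfolding wardrop_def
      by (intro mult_right_mono) (auto intro!: mult_nonneg_nonneg)
    ultimately show "social_cost E P c f - \<theta> * M * max_od_cost f \<le> social_cost E P c g" by simp
  qed
qed

lemma PoA_tendsto_1: "((\<lambda>M. PoA E I Paths c (\<lambda>i. lam i * M)) \<longlongrightarrow> 1) F"
proof (rule tendstoI)
  fix \<epsilon> :: real assume \<epsilon>: "0 < \<epsilon>"
  define \<mu> where "\<mu> = Min (lam ` I)"
  have \<mu>: "\<And>i. i \<in> I \<Longrightarrow> \<mu> \<le> lam i" "0 < \<mu>"
    unfolding \<mu>_def using finite_I I_nonempty lam_pos by (auto simp: Min_gr_iff)
  define r where "r = min (1/2) (\<epsilon>/4)"
  have r: "0 < r" "r \<le> 1/2" "r \<le> \<epsilon>/4" unfolding r_def using \<epsilon> by auto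
  have "0 < r * \<mu>" using r \<mu> by simp
  from eventually_wardrop_near_optimal[OF this] eventually_pos_at_top_or_at_right_0[OF F_cases]
  show "eventually (\<lambda>M. dist (PoA E I Paths c (\<lambda>i. lam i * M)) 1 < \<epsilon>) F"
  proof eventually_elim
    case (elim M)
    have "1 \<le> PoA E I Paths c (\<lambda>i. lam i * M) \<and> PoA E I Paths c (\<lambda>i. lam i * M) \<le> 1 + 2 * r"
      by (intro conjI PoA_bounds_of_near_optimal[of _ "\<mu> * M"])
         (use elim lam_pos \<mu> r in \<open>auto simp: algebra_simps intro: mult_right_mono less_imp_le\<close>)
    thus ?case using r \<epsilon> by (simp add: dist_real_def)
  qed
qed

end

lemma power_limit_pos:
  fixes c :: "real \<Rightarrow> real"
  assumes F: "F = at_top \<or> F = at_right 0" and c: "\<And>x. 0 \<le> x \<Longrightarrow> 0 \<le> c x"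
    and lim: "((\<lambda>x. c x / x powr q) \<longlongrightarrow> L) F" and L: "L \<noteq> 0"
  shows "0 < L"
proof -
  have "F \<noteq> bot" using F trivial_limit_at_right_real trivial_limit_at_top_linorder by metis
  moreover have "eventually (\<lambda>x. 0 \<le> c x / x powr q) F"
    using eventually_pos_at_top_or_at_right_0[OF F] by eventually_elim (simp add: c)
  ultimately have "0 \<le> L" using tendsto_lowerbound[OF lim] by blast
  thus ?thesis using L by simp
qed

theorem corollary5p4:
  fixes E :: "'e set" and src tgt :: "'e \<Rightarrow> 'v"
    and I :: "'i set" and orig dst :: "'i \<Rightarrow> 'v" and Paths :: "'i \<Rightarrow> 'e list set"
    and c :: "'e \<Rightarrow> real \<Rightarrow> real" and lam :: "'i \<Rightarrow> real" and q :: "'e \<Rightarrow> real"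
    and F :: "real filter"
  assumes "F = at_top \<or> F = at_right 0"
    and "finite E" and "finite I"
    and "\<And>i. i \<in> I \<Longrightarrow> finite (Paths i) \<and> Paths i \<noteq> {}"
    and "\<And>i p. i \<in> I \<Longrightarrow> p \<in> Paths i \<Longrightarrow> is_path E src tgt (orig i) (dst i) p"
    and "\<And>i j. i \<in> I \<Longrightarrow> j \<in> I \<Longrightarrow> i \<noteq> j \<Longrightarrow> Paths i \<inter> Paths j = {}"
    and "\<And>e. e \<in> E \<Longrightarrow> continuous_on {0..} (c e)"
    and "\<And>e. e \<in> E \<Longrightarrow> mono_on {0..} (c e)"
    and "\<And>e x. e \<in> E \<Longrightarrow> 0 \<le> x \<Longrightarrow> 0 \<le> c e x"
    and "\<And>i. i \<in> I \<Longrightarrow> 0 < lam i"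
    and "(\<Sum>i\<in>I. lam i) = 1"
    and "\<And>e. e \<in> E \<Longrightarrow> 0 \<le> q e \<and>
           (\<exists>L. L \<noteq> 0 \<and> ((\<lambda>x. c e x / x powr q e) \<longlongrightarrow> L) F)"
  shows "((\<lambda>M. PoA E I Paths c (\<lambda>i. lam i * M)) \<longlongrightarrow> 1) F"
proof -
  have "\<forall>e\<in>E. \<exists>L. L \<noteq> 0 \<and> ((\<lambda>x. c e x / x powr q e) \<longlongrightarrow> L) F" using assms(12) by blast
  then obtain a where a: "\<forall>e\<in>E. a e \<noteq> 0 \<and> ((\<lambda>x. c e x / x powr q e) \<longlongrightarrow> a e) F"
    by (metis bchoice)
  interpret scaled_routing_game E I Paths c q a F lam
  proof unfold_locales
    show "I \<noteq> {}" using assms(11) by auto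
    show "\<And>i p. i \<in> I \<Longrightarrow> p \<in> Paths i \<Longrightarrow> set p \<subseteq> E"
      using assms(5) unfolding is_path_def by blast
    show "\<And>e. e \<in> E \<Longrightarrow> 0 < a e" using power_limit_pos[OF assms(1)] assms(9) a by blast
  qed (use assms a in auto)
  show ?thesis by (rule PoA_tendsto_1)
qed

end
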